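(* Let $k\ge 2$ and let $u(n)$ satisfy $u(n)\to\infty$ and $u(n)/n\to0$. For any constant $0<\mu<(k(k-1))^{-1}$ and any $\tau>\frac{k(k-1)\mu}{1-k(k-1)\mu}$, with probability tending to $1$ as $n\to\infty$ the random bipartite graph with $m=\lfloor\mu n\rfloor$ constraint vertices has a $k$-stopping set contained in $\{u(n)+1,\dots,n\}$ of size larger than $n-(1+\tau)u(n)$.
   Context: Random bipartite graph: variable vertices $[n]$, constraint vertices $[m]$; for each $a\in[m]$ independently, a $k$-tuple of pairwise distinct elements of $[n]$ is chosen uniformly among all $n(n-1)\cdots(n-k+1)$ such tuples, and $\partial(a)\subseteq[n]$ denotes the set of its entries. $d$-stopping set: a set $V'\subseteq[n]$ such that $|\partial(a)\cap V'|\notin\{1,2,\dots,d-1\}$ for every $a\in[m]$. *)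

theory Defs
  imports Complex_Main "HOL-Library.FuncSet"
begin

definition tuples :: "nat \<Rightarrow> nat \<Rightarrow> nat list set" where
  "tuples n k = {xs. length xs = k \<and> distinct xs \<and> set xs \<subseteq> {1..n}}"

text \<open>All configurations of the random bipartite graph: each constraint a in [m] = {1..m}
  is assigned a k-tuple of pairwise distinct variables; the uniform distribution on this
  finite set is the model of the paper.\<close>
definition configs :: "nat \<Rightarrow> nat \<Rightarrow> nat \<Rightarrow> (nat \<Rightarrow> nat list) set" where
  "configs n m k = PiE {1..m} (\<lambda>_. tuples n k)"

definition stopping_set :: "nat \<Rightarrow> nat \<Rightarrow> (nat \<Rightarrow> nat list) \<Rightarrow> nat set \<Rightarrow> bool" where
  "stopping_set d m G V = (\<forall>a\<in>{1..m}. card (set (G a) \<inter> V) \<notin> {1..d-1})"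

definition prob_cfg :: "nat \<Rightarrow> nat \<Rightarrow> nat \<Rightarrow> ((nat \<Rightarrow> nat list) \<Rightarrow> bool) \<Rightarrow> real" where
  "prob_cfg n m k P = real (card {G \<in> configs n m k. P G}) / real (card (configs n m k))"

end

theory Submission
  imports Defs "HOL-Combinatorics.Transposition"
begin

(*
  Fix a configuration G and call a "seed walk" a start variable
  y in {1..u} followed by a nonempty list of steps (a_1,z_1),...,(a_L,z_L) with pairwise
  distinct constraints a_i such that each step moves between two distinct variables of
  the constraint a_i.  Let R(G) be {1..u} together with the end points of all seed walks.
  R(G) is closed under "some variable of a constraint is in R(G)", hence V = {1..n} - R(G)
  is a k-stopping set inside {u+1..n}, and |V| >= n - u - N(G), where N(G) counts seed walks.

  It remains to show N(G) <= tau*u with high probability.  Since distinct constraints are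
  independent and a fixed pair of variables lies in a random constraint with probability
  k(k-1)/(n(n-1)), a fixed walk of length L is present with probability about (rho/n)^L,
  rho = k(k-1)mu < 1; so the expected number of seed walks of length L is at most u rho^L.
  Walks longer than a constant L0 are handled by Markov's inequality.  For the short walks
  a second moment bound (conditioning on the constraints of one walk: walks avoiding them
  behave independently, walks meeting them have bounded total weight) and Chebyshev's
  inequality show that their number is at most u rho/(1-rho) + delta u with probability
  1 - O(1/u + 1/n).
*)

lemma tuples_finite: "finite (tuples n k)"
proof -
  have "tuples n k \<subseteq> {xs. set xs \<subseteq> {1..n} \<and> length xs
      \<le> k}" by (auto simp: tuples_def)
  thus ?thesis using finite_lists_length_le[of "{1..n}" k] finite_subset by blast
qed

lemma tuples_card_pos: "k \<le> n \<Longrightarrow> card (tuples n k) > 0"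
proof -
  assume "k \<le> n"
  have "card (tuples n k) = \<Prod>{n - k + 1 .. n}"
    unfolding tuples_def using card_lists_distinct_length_eq[of "{1..n}" k] \<open>k\<le>n\<close>
    by (simp add: conj_commute)
  moreover have "\<Prod>{n - k + 1 .. n} > (0::nat)" by (auto intro: prod_pos)
  ultimately show ?thesis by simp
qed

lemma tuples_set: "t \<in> tuples n k \<Longrightarrow> set t \<subseteq> {1..n} \<and> card (set t) = k"
  by (auto simp: tuples_def distinct_card)

lemma configs_finite: "finite (configs n m k)"
  unfolding configs_def by (rule finite_PiE) (auto simp: tuples_finite)

lemma configs_card: "card (configs n m k) = card (tuples n k) ^ m"
  unfolding configs_def by (simp add: card_PiE)

lemma configs_mem: "G \<in> configs n m k \<Longrightarrow> b \<in> {1..m}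
    \<Longrightarrow> G b \<in> tuples n k"
  unfolding configs_def by auto

lemma configs_empty_if: "m \<ge> 1 \<Longrightarrow> tuples n k = {} \<Longrightarrow> configs n m k = {}"
  unfolding configs_def by (auto simp: PiE_eq_empty_iff)

(* Independence of the constraints: if F does not look at coordinate b, then averaging
   g (G b) * F G over configurations factorises into the averages of g and of F. *)
lemma sum_update_coordinate:
  fixes g :: "nat list \<Rightarrow> real" and F :: "(nat \<Rightarrow> nat list) \<Rightarrow> real"
  assumes b: "b \<in> {1..m}"
    and F: "\<And>G t. G \<in> configs n m k \<Longrightarrow> t \<in> tuples n k
        \<Longrightarrow> F (G(b := t)) = F G"
  shows "(\<Sum>G\<in>configs n m k. g (G b) * F G) * card (tuples n k)
       = (\<Sum>t\<in>tuples n k. g t) * (\<Sum>G\<in>configs n m k. F G)"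
proof -
  let ?C = "configs n m k" and ?T = "tuples n k"
  let ?h = "\<lambda>(G, t). (G(b := t), G b)"
  have upd: "G(b := t) \<in> ?C" if "G \<in> ?C" "t \<in> ?T" for G t
    using that b unfolding configs_def by (auto simp: PiE_def extensional_def)
  have "(\<Sum>(G,t)\<in>?C \<times> ?T. g t * F (G(b:=t))) = (\<Sum>(G,t)\<in>?C \<times> ?T. g (G b) * F G)"
    by (rule sum.reindex_bij_witness[of _ ?h ?h])
       (auto simp: upd configs_mem[OF _ b])
  moreover have "(\<Sum>(G,t)\<in>?C \<times> ?T. g t * F (G(b:=t)))
      = (\<Sum>t\<in>?T. g t) * (\<Sum>G\<in>?C. F G)"
    by (simp add: sum.cartesian_product[symmetric] F sum_distrib_left sum_distrib_right mult.commute)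
  moreover have "(\<Sum>(G,t)\<in>?C \<times> ?T. g (G b) * F G) = (\<Sum>G\<in>?C. g (G b) * F G) * card ?T"
    by (simp add: sum.cartesian_product[symmetric] sum_distrib_left sum_distrib_right mult.commute)
  ultimately show ?thesis by simp
qed

(* Renaming two variables permutes the tuples; this symmetry makes all variables,
   resp. all pairs of variables, equally likely to occur in a random tuple. *)
lemma map_transpose_tuples:
  "a \<in> {1..n} \<Longrightarrow> b \<in> {1..n} \<Longrightarrow> t \<in> tuples n k
      \<Longrightarrow> map (transpose a b) t \<in> tuples n k"
  unfolding tuples_def by (auto simp: distinct_map transpose_def split: if_splits)

lemma mem_map_transpose: "v \<in> set (map (transpose a b) t) \<longleftrightarrow> transpose a b v \<in> set t"
  by (auto simp: image_iff) (metis transpose_involutory)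

lemma card_tuples_transpose:
  assumes "a \<in> {1..n}" "b \<in> {1..n}"
  shows "card {t\<in>tuples n k. P (map (transpose a b) t)} = card {t\<in>tuples n k. P t}"
proof (rule bij_betw_same_card[of "map (transpose a b)"])
  have inv: "map (transpose a b) (map (transpose a b) t) = t" for t
    by (simp add: map_idI)
  show "bij_betw (map (transpose a b)) {t \<in> tuples n k. P (map (transpose a b) t)} {t \<in> tuples n k. P t}"
    by (rule bij_betw_byWitness[of _ "map (transpose a b)"])
       (use assms map_transpose_tuples inv in auto)
qed

lemma double_counting:
  "finite A \<Longrightarrow> finite B \<Longrightarrow> (\<Sum>y\<in>A. card {t\<in>B. R y t})
      = (\<Sum>t\<in>B. card {y\<in>A. R y t})"
proof -
  assume fA: "finite A" and fB: "finite B"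
  have card_eq: "finite X \<Longrightarrow> card {x\<in>X. P x}
      = (\<Sum>x\<in>X. if P x then 1 else (0::nat))" for X P
    by (simp add: sum.If_cases Int_def)
  have "(\<Sum>y\<in>A. card {t\<in>B. R y t})
      = (\<Sum>y\<in>A. \<Sum>t\<in>B. if R y t then 1 else (0::nat))"
    using fB by (simp add: card_eq)
  also have "\<dots> = (\<Sum>t\<in>B. \<Sum>y\<in>A. if R y t then 1 else (0::nat))" by (rule sum.swap)
  also have "\<dots> = (\<Sum>t\<in>B. card {y\<in>A. R y t})"
    using fA by (simp add: card_eq)
  finally show ?thesis .
qed

lemma card_tuples_containing:
  assumes y: "y \<in> {1..n}"
  shows "card {t\<in>tuples n k. y \<in> set t} * n = k * card (tuples n k)"
proof -
  have eq: "card {t\<in>tuples n k. y' \<in> set t} = card {t\<in>tuples n k. y \<in> set t}"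
    if y': "y' \<in> {1..n}" for y'
  proof -
    have "card {t\<in>tuples n k. y' \<in> set t}
        = card {t\<in>tuples n k. y' \<in> set (map (transpose y y') t)}"
      using card_tuples_transpose[OF y y', where P="\<lambda>t. y' \<in> set t"] by simp
    also have "{t\<in>tuples n k. y' \<in> set (map (transpose y y') t)} = {t\<in>tuples n k. y \<in> set t}"
      by (simp only: mem_map_transpose transpose_apply_second)
    finally show ?thesis .
  qed
  have "(\<Sum>y'\<in>{1..n}. card {t\<in>tuples n k. y' \<in> set t})
      = (\<Sum>t\<in>tuples n k. card {y'\<in>{1..n}. y' \<in> set t})"
    by (rule double_counting) (auto simp: tuples_finite)
  also have "\<dots> = (\<Sum>t\<in>tuples n k. k)"
  proof (rule sum.cong)
    fix t assume "t \<in> tuples n k"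
    then have "set t \<subseteq> {1..n}" "card (set t) = k" using tuples_set by blast+
    then have "{y'\<in>{1..n}. y' \<in> set t} = set t" "card (set t) = k" by auto
    then show "card {y'\<in>{1..n}. y' \<in> set t} = k" by simp
  qed simp
  finally have "(\<Sum>y'\<in>{1..n}. card {t\<in>tuples n k. y' \<in> set t})
      = k * card (tuples n k)" by simp
  moreover have "(\<Sum>y'\<in>{1..n}. card {t\<in>tuples n k. y' \<in> set t})
      = n * card {t\<in>tuples n k. y \<in> set t}"
    using eq by simp
  ultimately show ?thesis by (simp add: mult.commute)
qed

lemma card_tuples_containing_pair:
  assumes y: "y \<in> {1..n}" and z: "z \<in> {1..n}" and yz: "y \<noteq> z"
  shows "card {t\<in>tuples n k. y \<in> set t \<and> z \<in> set t} * (n - 1)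
       = (k - 1) * card {t\<in>tuples n k. y \<in> set t}"
proof -
  let ?Ty = "{t\<in>tuples n k. y \<in> set t}"
  have eq: "card {t\<in>tuples n k. y \<in> set t \<and> z' \<in> set t}
      = card {t\<in>tuples n k. y \<in> set t \<and> z \<in> set t}"
    if z': "z' \<in> {1..n} - {y}" for z'
  proof -
    have "card {t\<in>tuples n k. y \<in> set t \<and> z' \<in> set t}
        = card {t\<in>tuples n k. y \<in> set (map (transpose z z') t) \<and> z' \<in> set (map (transpose z z') t)}"
      using card_tuples_transpose[OF z, of z', where P="\<lambda>t. y \<in> set t
          \<and> z' \<in> set t"] z' by simp
    also have "\<dots> = card {t\<in>tuples n k. y \<in> set t \<and> z \<in> set t}"
      using z' yz by (simp only: mem_map_transpose) (simp add: transpose_def)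
    finally show ?thesis .
  qed
  have "(\<Sum>z'\<in>{1..n}-{y}. card {t\<in>?Ty. z' \<in> set t})
      = (\<Sum>t\<in>?Ty. card {z'\<in>{1..n}-{y}. z' \<in> set t})"
    by (rule double_counting) (auto simp: tuples_finite)
  also have "\<dots> = (\<Sum>t\<in>?Ty. k - 1)"
  proof (rule sum.cong)
    fix t assume "t \<in> ?Ty"
    then have "set t \<subseteq> {1..n}" "card (set t) = k" "y \<in> set t" using tuples_set by blast+
    then have "{z'\<in>{1..n}-{y}. z' \<in> set t} = set t - {y}" "card (set t) = k" "y \<in> set t"
      by auto
    then show "card {z'\<in>{1..n}-{y}. z' \<in> set t} = k - 1" by simp
  qed simp
  finally have A: "(\<Sum>z'\<in>{1..n}-{y}. card {t\<in>?Ty. z' \<in> set t}) = (k - 1) * card ?Ty" by simp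
  have "(\<Sum>z'\<in>{1..n}-{y}. card {t\<in>?Ty. z' \<in> set t})
     = (\<Sum>z'\<in>{1..n}-{y}. card {t\<in>tuples n k. y \<in> set t \<and> z \<in> set t})"
  proof (rule sum.cong)
    fix z' assume z': "z' \<in> {1..n}-{y}"
    have "{t\<in>?Ty. z' \<in> set t} = {t\<in>tuples n k. y \<in> set t \<and> z' \<in> set t}" by auto
    then show "card {t\<in>?Ty. z' \<in> set t} = card {t\<in>tuples n k. y \<in> set t \<and> z \<in> set t}"
      using eq[OF z'] by simp
  qed simp
  also have "\<dots> = (n - 1) * card {t\<in>tuples n k. y \<in> set t \<and> z \<in> set t}" using y by simp
  finally show ?thesis using A by (simp add: mult.commute)
qed

lemma tuples_pair_frequency:
  assumes y: "y \<in> {1..n}" and z: "z \<in> {1..n}" and yz: "y \<noteq> z"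
  shows "real (card {t\<in>tuples n k. y \<in> set t \<and> z \<in> set t}) * (real n * (real n - 1))
       = real k * (real k - 1) * real (card (tuples n k))"
proof -
  define P2 where "P2 = card {t\<in>tuples n k. y \<in> set t \<and> z \<in> set t}"
  define P1 where "P1 = card {t\<in>tuples n k. y \<in> set t}"
  define T where "T = card (tuples n k)"
  have n1: "n \<ge> 1" using y by auto
  have "real (P2 * (n - 1)) = real ((k - 1) * P1)"
    using card_tuples_containing_pair[OF y z yz, of k] unfolding P1_def P2_def by simp
  then have a: "real P2 * (real n - 1) = real (k - 1) * real P1"
    using n1 by (simp add: of_nat_diff)
  have b: "real P1 * real n = real k * real T"
    using arg_cong[OF card_tuples_containing[OF y, of k], of real] unfolding P1_def T_def by simp
  show ?thesis
  proof (cases "k = 0")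
    case True
    then have "{t\<in>tuples n k. y \<in> set t \<and> z \<in> set t} = {}" by (auto simp: tuples_def)
    then have "real (card {t\<in>tuples n k. y \<in> set t \<and> z \<in> set t}) = 0"
      by (simp only: card.empty of_nat_0)
    then show ?thesis using True by simp
  next
    case False
    then have rk: "real (k - 1) = real k - 1" by (simp add: of_nat_diff)
    have "real P2 * (real n * (real n - 1)) = real n * (real P2 * (real n - 1))" by simp
    also have "\<dots> = (real k - 1) * (real P1 * real n)" using a rk by simp
    also have "\<dots> = real k * (real k - 1) * real T" using b by simp
    finally show ?thesis unfolding P2_def T_def .
  qed
qed

(* Walks.  A walk from y is a list of steps (b,z): "use constraint b to move to variable z".
   It is present in G if every step joins two distinct variables of the constraint used. *)
fun walk_ok :: "(nat \<Rightarrow> nat list) \<Rightarrow> nat \<Rightarrow> (nat \<times> nat) list \<Rightarrow> bool" where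
  "walk_ok G y [] = True"
| "walk_ok G y ((b,z)#st) = (y \<noteq> z \<and> y \<in> set (G b) \<and> z \<in> set (G b)
    \<and> walk_ok G z st)"

fun walk_end :: "nat \<Rightarrow> (nat \<times> nat) list \<Rightarrow> nat" where
  "walk_end y [] = y"
| "walk_end y ((b,z)#st) = walk_end z st"

definition pair_ind :: "nat \<Rightarrow> nat \<Rightarrow> nat list \<Rightarrow> real" where
  "pair_ind y z t = (if y \<noteq> z \<and> y \<in> set t \<and> z \<in> set t then 1 else 0)"

definition pair_weight :: "nat \<Rightarrow> nat \<Rightarrow> nat \<Rightarrow> nat \<Rightarrow> real" where
  "pair_weight n k y z =
     (if y \<noteq> z \<and> y \<in> {1..n} \<and> z \<in> {1..n} then real k * (real k - 1) / (real n * (real n - 1)) else 0)"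

(* Conditional weight of a walk when the constraints in J are frozen to their values in G:
   steps through frozen constraints contribute their indicator, the other steps their
   probability.  For J = {} this is the probability of the walk (see walk_prob below). *)
fun walk_weight :: "nat \<Rightarrow> nat \<Rightarrow> nat set \<Rightarrow> (nat \<Rightarrow> nat list) \<Rightarrow> nat \<Rightarrow> (nat \<times> nat) list \<Rightarrow> real" where
  "walk_weight n k J G y [] = 1"
| "walk_weight n k J G y ((b,z)#st) =
     (if b \<in> J then pair_ind y z (G b) else pair_weight n k y z) * walk_weight n k J G z st"

definition depends_on :: "nat set \<Rightarrow> ((nat \<Rightarrow> nat list) \<Rightarrow> real) \<Rightarrow> bool" where
  "depends_on J F = (\<forall>G G'. (\<forall>j\<in>J. G j = G' j) \<longrightarrow> F G = F G')"

lemma pair_ind_nonneg: "pair_ind y z t \<ge> 0" by (simp add: pair_ind_def)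

lemma real_mult_pred_nonneg: "real n * (real n - 1) \<ge> 0" by (cases n) auto

lemma pair_weight_nonneg: "k \<ge> 1 \<Longrightarrow> pair_weight n k y z \<ge> 0"
  unfolding pair_weight_def using real_mult_pred_nonneg[of n] real_mult_pred_nonneg[of k]
  by (auto intro!: divide_nonneg_nonneg)

lemma walk_weight_nonneg: "k \<ge> 1 \<Longrightarrow> walk_weight n k J G y st \<ge> 0"
  by (induction n k J G y st rule: walk_weight.induct)
     (auto intro!: mult_nonneg_nonneg simp: pair_ind_nonneg pair_weight_nonneg)

lemma walk_weight_cong_frozen:
  "J \<inter> fst ` set st = J' \<inter> fst ` set st \<Longrightarrow> walk_weight n k J G y st
      = walk_weight n k J' G y st"
proof (induction st arbitrary: y)
  case Nil then show ?case by simp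
next
  case (Cons s st)
  obtain b z where s: "s = (b,z)" by (cases s)
  have tail: "J \<inter> fst ` set st = J' \<inter> fst ` set st" using Cons.prems by auto
  have head: "b \<in> J \<longleftrightarrow> b \<in> J'" using Cons.prems s by auto
  show ?case using Cons.IH[OF tail] head s by simp
qed

lemma walk_weight_depends: "depends_on J (\<lambda>G. walk_weight n k J G y st)"
  unfolding depends_on_def
proof (intro allI impI)
  fix G G' :: "nat \<Rightarrow> nat list" assume h: "\<forall>j\<in>J. G j = G' j"
  show "walk_weight n k J G y st = walk_weight n k J G' y st"
    by (induction st arbitrary: y) (use h in auto)
qed

lemma depends_on_mult: "depends_on J F \<Longrightarrow> depends_on J F'
    \<Longrightarrow> depends_on J (\<lambda>G. F G * F' G)"
  unfolding depends_on_def by metis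

lemma depends_on_mono: "depends_on J F \<Longrightarrow> J \<subseteq> J' \<Longrightarrow> depends_on J' F"
  unfolding depends_on_def by (meson subsetD)

lemma depends_on_coord: "b \<in> J \<Longrightarrow> depends_on J (\<lambda>G. g (G b))"
  unfolding depends_on_def by auto

lemma walk_ok_depends: "depends_on (fst ` set st) (\<lambda>G. if walk_ok G y st then 1 else 0)"
proof -
  have "walk_ok G y st = walk_ok G' y st" if "\<forall>j\<in>fst ` set st. G j = G' j" for G G'
    using that by (induction st arbitrary: y) auto
  then show ?thesis unfolding depends_on_def by metis
qed

lemma sum_pair_ind:
  "(\<Sum>t\<in>tuples n k. pair_ind y z t) = pair_weight n k y z * real (card (tuples n k))"
proof (cases "y \<noteq> z \<and> y \<in> {1..n} \<and> z \<in> {1..n}")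
  case True
  then have y: "y \<in> {1..n}" and z: "z \<in> {1..n}" and yz: "y \<noteq> z" by auto
  then have nn: "real n * (real n - 1) \<noteq> 0" by auto
  have "(\<Sum>t\<in>tuples n k. pair_ind y z t) = real (card {t\<in>tuples n k. y \<in> set t
      \<and> z \<in> set t})"
    using yz by (simp add: pair_ind_def sum.If_cases tuples_finite Int_def)
  also have "\<dots> = real k * (real k - 1) * real (card (tuples n k)) / (real n * (real n - 1))"
    using tuples_pair_frequency[OF y z yz, of k] nn by (simp add: eq_divide_eq)
  finally show ?thesis using True by (simp add: pair_weight_def)
next
  case False
  have "pair_ind y z t = 0" if "t \<in> tuples n k" for t
    using False tuples_set[OF that] by (auto simp: pair_ind_def)
  then have "(\<Sum>t\<in>tuples n k. pair_ind y z t) = 0" by simp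
  moreover have "pair_weight n k y z = 0" unfolding pair_weight_def using False by (rule if_not_P)
  ultimately show ?thesis by simp
qed

lemma sum_resample_step:
  assumes b: "b \<in> {1..m}" and F: "depends_on J F" and bJ: "b \<notin> J"
  shows "(\<Sum>G\<in>configs n m k. pair_ind y z (G b) * F G)
       = pair_weight n k y z * (\<Sum>G\<in>configs n m k. F G)"
proof (cases "tuples n k = {}")
  case True
  then show ?thesis using configs_empty_if[of m n k] b by simp
next
  case False
  then have "real (card (tuples n k)) > 0" using tuples_finite by (simp add: card_gt_0_iff)
  moreover have "(\<Sum>G\<in>configs n m k. pair_ind y z (G b) * F G) * card (tuples n k)
      = (\<Sum>t\<in>tuples n k. pair_ind y z t) * (\<Sum>G\<in>configs n m k. F G)"
  proof (rule sum_update_coordinate[OF b])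
    fix G t show "F (G(b := t)) = F G"
      using F bJ unfolding depends_on_def by (metis fun_upd_other)
  qed
  ultimately show ?thesis by (simp add: sum_pair_ind)
qed

lemma sum_walk_indicator:
  assumes "distinct (map fst st)" "fst ` set st \<subseteq> {1..m}" "depends_on J F"
  shows "(\<Sum>G\<in>configs n m k. F G * (if walk_ok G y st then 1 else 0))
       = (\<Sum>G\<in>configs n m k. F G * walk_weight n k J G y st)"
  using assms
proof (induction st arbitrary: y J F)
  case Nil
  then show ?case by simp
next
  case (Cons s st)
  obtain b z where s: "s = (b,z)" by (cases s)
  have bn: "b \<notin> fst ` set st" and dst: "distinct (map fst st)" using Cons.prems(1) s by auto
  have bm: "b \<in> {1..m}" and stm: "fst ` set st \<subseteq> {1..m}" using Cons.prems(2) s by auto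
  have split: "(if walk_ok G y ((b,z)#st) then 1 else 0 :: real)
             = pair_ind y z (G b) * (if walk_ok G z st then 1 else 0)" for G
    by (simp add: pair_ind_def)
  let ?F' = "\<lambda>G. F G * pair_ind y z (G b)"
  have step: "(\<Sum>G\<in>configs n m k. F G * (if walk_ok G y (s#st) then 1 else 0))
            = (\<Sum>G\<in>configs n m k. ?F' G * (if walk_ok G z st then 1 else 0))"
    unfolding s split by (simp add: mult.assoc)
  show ?case
  proof (cases "b \<in> J")
    case True
    have "depends_on J ?F'" by (rule depends_on_mult[OF Cons.prems(3) depends_on_coord[OF True]])
    then have "(\<Sum>G\<in>configs n m k. ?F' G * (if walk_ok G z st then 1 else 0))
             = (\<Sum>G\<in>configs n m k. ?F' G * walk_weight n k J G z st)"
      by (rule Cons.IH[OF dst stm])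
    also have "\<dots> = (\<Sum>G\<in>configs n m k. F G * walk_weight n k J G y (s#st))"
      using True by (simp add: s mult.assoc)
    finally show ?thesis using step by simp
  next
    case False
    have "depends_on (insert b J) ?F'"
      by (rule depends_on_mult[OF depends_on_mono[OF Cons.prems(3)] depends_on_coord]) auto
    then have "(\<Sum>G\<in>configs n m k. ?F' G * (if walk_ok G z st then 1 else 0))
             = (\<Sum>G\<in>configs n m k. ?F' G * walk_weight n k (insert b J) G z st)"
      by (rule Cons.IH[OF dst stm])
    also have "\<dots> = (\<Sum>G\<in>configs n m k. pair_ind y z (G b) * (F G * walk_weight n k J G z st))"
    proof (rule sum.cong)
      fix G
      show "?F' G * walk_weight n k (insert b J) G z st
          = pair_ind y z (G b) * (F G * walk_weight n k J G z st)"
        using walk_weight_cong_frozen[of "insert b J" st J] bn by auto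
    qed simp
    also have "\<dots> = pair_weight n k y z * (\<Sum>G\<in>configs n m k. F G * walk_weight n k J G z st)"
      by (rule sum_resample_step[OF bm depends_on_mult[OF Cons.prems(3) walk_weight_depends] False])
    also have "\<dots> = (\<Sum>G\<in>configs n m k. F G * walk_weight n k J G y (s#st))"
      using False by (simp add: s sum_distrib_left mult.left_commute)
    finally show ?thesis using step by simp
  qed
qed

definition walks_of_length :: "(nat \<times> nat) set \<Rightarrow> nat \<Rightarrow> (nat \<times> nat) list set" where
  "walks_of_length S L = {st. set st \<subseteq> S \<and> length st = L}"

lemma walks_of_length_finite: "finite S \<Longrightarrow> finite (walks_of_length S L)"
  unfolding walks_of_length_def by (rule finite_lists_length_eq)

lemma walks_of_length_0: "walks_of_length S 0 = {[]}" by (auto simp: walks_of_length_def)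

lemma sum_walks_of_length_Suc:
  assumes "finite S"
  shows "(\<Sum>st\<in>walks_of_length S (Suc L). f st)
      = (\<Sum>s\<in>S. \<Sum>st\<in>walks_of_length S L. f (s#st))"
proof -
  have "walks_of_length S (Suc L) = (\<lambda>(xs, n). n#xs) ` (walks_of_length S L \<times> S)"
    unfolding walks_of_length_def by (rule lists_length_Suc_eq)
  then have "(\<Sum>st\<in>walks_of_length S (Suc L). f st)
      = sum (f \<circ> (\<lambda>(xs, n). n#xs)) (walks_of_length S L \<times> S)"
    by (simp add: sum.reindex inj_split_Cons)
  also have "\<dots> = (\<Sum>p\<in>walks_of_length S L \<times> S. f (snd p # fst p))"
    by (simp add: comp_def case_prod_beta)
  also have "\<dots> = (\<Sum>st\<in>walks_of_length S L. \<Sum>s\<in>S. f (s#st))"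
    by (simp only: sum.cartesian_product) (simp add: case_prod_beta)
  also have "\<dots> = (\<Sum>s\<in>S. \<Sum>st\<in>walks_of_length S L. f (s#st))" by (rule sum.swap)
  finally show ?thesis .
qed

lemma walk_sum:
  assumes "finite S" "finite Y" "finite I"
  shows "(\<Sum>q\<in>{(y,st). y\<in>Y \<and> set st \<subseteq> S \<and> length st \<in> I}. f q)
       = (\<Sum>L\<in>I. \<Sum>y\<in>Y. \<Sum>st\<in>walks_of_length S L. f (y,st))"
proof -
  have eq: "{(y,st). y\<in>Y \<and> set st \<subseteq> S \<and> length st \<in> I}
      = (\<Union>L\<in>I. Y \<times> walks_of_length S L)"
    by (auto simp: walks_of_length_def)
  have "(\<Sum>q\<in>(\<Union>L\<in>I. Y \<times> walks_of_length S L). f q)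
      = (\<Sum>L\<in>I. \<Sum>q\<in>Y \<times> walks_of_length S L. f q)"
    by (rule sum.UNION_disjoint) (auto simp: assms walks_of_length_finite, auto simp: walks_of_length_def)
  also have "\<dots> = (\<Sum>L\<in>I. \<Sum>y\<in>Y. \<Sum>st\<in>walks_of_length S L. f (y,st))"
    by (simp add: sum.cartesian_product)
  finally show ?thesis using eq by simp
qed

definition step_weight :: "nat \<Rightarrow> nat \<Rightarrow> nat set \<Rightarrow> (nat \<Rightarrow> nat list) \<Rightarrow> nat \<Rightarrow> nat \<times> nat \<Rightarrow> real" where
  "step_weight n k J G y s = (if fst s \<in> J then pair_ind y (snd s) (G (fst s)) else pair_weight n k y (snd s))"

lemma walk_weight_Cons: "walk_weight n k J G y (s#st)
    = step_weight n k J G y s * walk_weight n k J G (snd s) st"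
  by (cases s) (simp add: step_weight_def)

lemma step_weight_nonneg: "k \<ge> 1 \<Longrightarrow> step_weight n k J G y s \<ge> 0"
  by (simp add: step_weight_def pair_ind_nonneg pair_weight_nonneg)

lemma walk_weight_sum_le_pow:
  assumes S: "finite S" and k: "k \<ge> 1" and K: "\<And>y. (\<Sum>s\<in>S. step_weight n k J G y s)
      \<le> K" "K \<ge> 0"
  shows "(\<Sum>st\<in>walks_of_length S L. walk_weight n k J G y st) \<le> K ^ L"
proof (induction L arbitrary: y)
  case 0 then show ?case by (simp add: walks_of_length_0)
next
  case (Suc L)
  have "(\<Sum>st\<in>walks_of_length S (Suc L). walk_weight n k J G y st)
      = (\<Sum>s\<in>S. step_weight n k J G y s * (\<Sum>st\<in>walks_of_length S L. walk_weight n k J G (snd s) st))"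
    by (simp add: sum_walks_of_length_Suc[OF S] walk_weight_Cons sum_distrib_left)
  also have "\<dots> \<le> (\<Sum>s\<in>S. step_weight n k J G y s * K ^ L)"
    by (rule sum_mono, rule mult_left_mono[OF Suc.IH step_weight_nonneg[OF k]])
  also have "\<dots> \<le> K * K ^ L" using K(1)[of y] by (simp add: sum_distrib_right[symmetric] mult_right_mono K(2))
  finally show ?case by simp
qed

lemma pair_weight_le: "k \<ge> 1 \<Longrightarrow> pair_weight n k y z
    \<le> real k * (real k - 1) / (real n * (real n - 1))"
  unfolding pair_weight_def using real_mult_pred_nonneg[of n] real_mult_pred_nonneg[of k] by (auto intro!: divide_nonneg_nonneg)

lemma pair_weight_row_sum: "(\<Sum>z\<in>{1..n}. pair_weight n k y z) \<le> real k * (real k - 1) / real n"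
proof (cases "y \<in> {1..n}")
  case True
  then have n1: "n \<ge> 1" by auto
  have "(\<Sum>z\<in>{1..n}. pair_weight n k y z)
      = (\<Sum>z\<in>{1..n}-{y}. real k * (real k - 1) / (real n * (real n - 1)))"
    using True by (intro sum.mono_neutral_cong_right) (auto simp: pair_weight_def)
  also have "\<dots> = real (n - 1) * (real k * (real k - 1) / (real n * (real n - 1)))"
    using True by simp
  also have "\<dots> \<le> real k * (real k - 1) / real n"
  proof (cases "n = 1")
    case True then show ?thesis using real_mult_pred_nonneg[of k] by simp
  next
    case False then have "real n - 1 \<noteq> 0" "real (n-1) = real n - 1" using n1 by auto
    then show ?thesis by (simp add: field_simps)
  qed
  finally show ?thesis by simp
next
  case False
  then have "\<not> (y \<noteq> z \<and> y \<in> {1..n} \<and> z \<in> {1..n})" for z by auto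
  then have "pair_weight n k y z = 0" for z unfolding pair_weight_def by (rule if_not_P)
  then show ?thesis
    using real_mult_pred_nonneg[of k] by (simp add: divide_nonneg_nonneg)
qed

lemma pair_ind_row_sum: "t \<in> tuples n k \<Longrightarrow> (\<Sum>z\<in>{1..n}. pair_ind y z t)
    \<le> real k"
proof -
  assume t: "t \<in> tuples n k"
  have "(\<Sum>z\<in>{1..n}. pair_ind y z t) \<le> (\<Sum>z\<in>{1..n}. if z \<in> set t then 1 else 0)"
    by (rule sum_mono) (simp add: pair_ind_def)
  also have "\<dots> = real (card ({1..n} \<inter> set t))" by (simp add: sum.If_cases)
  also have "\<dots> \<le> real k" using tuples_set[OF t] by (metis card_mono finite_set Int_lower2 of_nat_mono)
  finally show ?thesis .
qed

lemma pair_ind_row_sum_mem: "t \<in> tuples n k \<Longrightarrow> (\<Sum>z\<in>{1..n}. pair_ind y z t)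
    \<le> (if y \<in> set t then real k else 0)"
  using pair_ind_row_sum[of t n k y] by (auto simp: pair_ind_def)

lemma row_bound:
  assumes G: "G \<in> configs n m k" and J: "J \<subseteq> {1..m}" and k: "k \<ge> 1"
  shows "(\<Sum>s\<in>{1..m}\<times>{1..n}. step_weight n k J G y s) \<le> real (card J) * real k
      + real m * (real k * (real k - 1) / real n)"
proof -
  have "(\<Sum>s\<in>{1..m}\<times>{1..n}. step_weight n k J G y s)
      = (\<Sum>b\<in>{1..m}. \<Sum>z\<in>{1..n}. step_weight n k J G y (b,z))"
    by (simp add: sum.cartesian_product)
  also have "\<dots> = (\<Sum>b\<in>J. \<Sum>z\<in>{1..n}. step_weight n k J G y (b,z))
      + (\<Sum>b\<in>{1..m}-J. \<Sum>z\<in>{1..n}. step_weight n k J G y (b,z))"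
    by (subst sum.subset_diff[OF J]) (simp_all add: add.commute)
  also have "(\<Sum>b\<in>J. \<Sum>z\<in>{1..n}. step_weight n k J G y (b,z)) \<le> (\<Sum>b\<in>J. real k)"
  proof (rule sum_mono)
    fix b assume b: "b \<in> J"
    then show "(\<Sum>z\<in>{1..n}. step_weight n k J G y (b,z)) \<le> real k"
      using pair_ind_row_sum[OF configs_mem[OF G]] J by (auto simp: step_weight_def)
  qed
  also have "(\<Sum>b\<in>{1..m}-J. \<Sum>z\<in>{1..n}. step_weight n k J G y (b,z))
      \<le> (\<Sum>b\<in>{1..m}-J. real k * (real k - 1) / real n)"
  proof (rule sum_mono)
    fix b assume "b \<in> {1..m}-J"
    then show "(\<Sum>z\<in>{1..n}. step_weight n k J G y (b,z)) \<le> real k * (real k - 1) / real n"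
      using pair_weight_row_sum[of n k y] by (simp add: step_weight_def)
  qed
  also have "\<dots> \<le> (\<Sum>b\<in>{1..m}. real k * (real k - 1) / real n)"
    by (rule sum_mono2) (use real_mult_pred_nonneg[of k] in \<open>auto intro!: divide_nonneg_nonneg\<close>)
  finally show ?thesis by (simp add: mult.commute)
qed


definition meets :: "nat set \<Rightarrow> (nat \<times> nat) list \<Rightarrow> bool" where
  "meets J st = (\<exists>s\<in>set st. fst s \<in> J)"

definition overlap_weight :: "nat \<Rightarrow> nat \<Rightarrow> nat set \<Rightarrow> (nat \<Rightarrow> nat list) \<Rightarrow> (nat \<times> nat) set \<Rightarrow> nat \<Rightarrow> nat \<Rightarrow> real" where
  "overlap_weight n k J G S L y = (\<Sum>st\<in>walks_of_length S L. if meets J st then walk_weight n k J G y st else 0)"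

lemma overlap_weight_0: "overlap_weight n k J G S 0 y = 0"
  by (simp add: overlap_weight_def walks_of_length_0 meets_def)

lemma overlap_weight_nonneg: "k \<ge> 1 \<Longrightarrow> overlap_weight n k J G S L y \<ge> 0"
  unfolding overlap_weight_def by (rule sum_nonneg) (simp add: walk_weight_nonneg)

(* Recursion for the overlap weight: after a frozen step any continuation counts, after a
   free step the continuation must still meet J. *)
lemma overlap_weight_Suc:
  assumes "finite S"
  shows "overlap_weight n k J G S (Suc L) y = (\<Sum>s\<in>S. step_weight n k J G y s *
     (if fst s \<in> J then (\<Sum>st\<in>walks_of_length S L. walk_weight n k J G (snd s) st) else overlap_weight n k J G S L (snd s)))"
proof -
  have "overlap_weight n k J G S (Suc L) y
      = (\<Sum>s\<in>S. \<Sum>st\<in>walks_of_length S L. if meets J (s#st) then walk_weight n k J G y (s#st) else 0)"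
    unfolding overlap_weight_def by (rule sum_walks_of_length_Suc[OF assms])
  also have "\<dots> = (\<Sum>s\<in>S. step_weight n k J G y s *
     (if fst s \<in> J then (\<Sum>st\<in>walks_of_length S L. walk_weight n k J G (snd s) st) else overlap_weight n k J G S L (snd s)))"
  proof (rule sum.cong)
    fix s assume "s \<in> S"
    show "(\<Sum>st\<in>walks_of_length S L. if meets J (s#st) then walk_weight n k J G y (s#st) else 0)
        = step_weight n k J G y s *
     (if fst s \<in> J then (\<Sum>st\<in>walks_of_length S L. walk_weight n k J G (snd s) st) else overlap_weight n k J G S L (snd s))"
    proof (cases "fst s \<in> J")
      case True
      then show ?thesis by (simp add: meets_def walk_weight_Cons sum_distrib_left)
    next
      case False
      then have "meets J (s#st) = meets J st" for st by (simp add: meets_def)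
      then show ?thesis using False
        by (simp add: overlap_weight_def walk_weight_Cons sum_distrib_left if_distrib[of "\<lambda>x. step_weight n k J G y s * x"] cong: if_cong)
    qed
  qed simp
  finally show ?thesis .
qed

lemma frozen_first_step_le:
  assumes G: "G \<in> configs n m k" and b: "b \<in> J" and J: "J \<subseteq> {1..m}" and k: "k \<ge> 1"
    and K0: "K \<ge> 0" and K: "\<And>y. (\<Sum>s\<in>{1..m}\<times>{1..n}. step_weight n k J G y s) \<le> K"
  shows "(\<Sum>z\<in>{1..n}. pair_ind y z (G b) * (\<Sum>st\<in>walks_of_length ({1..m}\<times>{1..n}) L. walk_weight n k J G z st))
       \<le> (if y \<in> set (G b) then 1 else 0) * real k * K ^ L"
proof -
  have "(\<Sum>z\<in>{1..n}. pair_ind y z (G b) * (\<Sum>st\<in>walks_of_length ({1..m}\<times>{1..n}) L. walk_weight n k J G z st))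
      \<le> (\<Sum>z\<in>{1..n}. pair_ind y z (G b) * K ^ L)"
    by (intro sum_mono mult_left_mono walk_weight_sum_le_pow[OF _ k K K0] pair_ind_nonneg) simp
  also have "\<dots> = (\<Sum>z\<in>{1..n}. pair_ind y z (G b)) * K ^ L" by (simp add: sum_distrib_right)
  also have "\<dots> \<le> (if y \<in> set (G b) then real k else 0) * K ^ L"
    using b J by (intro mult_right_mono pair_ind_row_sum_mem[OF configs_mem[OF G]]) (auto simp: K0)
  finally show ?thesis by (cases "y \<in> set (G b)") simp_all
qed

lemma free_first_step_le:
  fixes n :: nat
  assumes k: "k \<ge> 1"
  defines "c \<equiv> real k * (real k - 1) / (real n * (real n - 1))"
  shows "(\<Sum>z\<in>{1..n}. pair_weight n k y z * overlap_weight n k J G S L z)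
       \<le> c * (\<Sum>z\<in>{1..n}. overlap_weight n k J G S L z)"
proof -
  have "(\<Sum>z\<in>{1..n}. pair_weight n k y z * overlap_weight n k J G S L z)
      \<le> (\<Sum>z\<in>{1..n}. c * overlap_weight n k J G S L z)"
    unfolding c_def by (intro sum_mono mult_right_mono pair_weight_le[OF k] overlap_weight_nonneg[OF k])
  then show ?thesis by (simp add: sum_distrib_left)
qed

lemma overlap_weight_Suc_le:
  assumes G: "G \<in> configs n m k" and J: "J \<subseteq> {1..m}" and k: "k \<ge> 1" and K0: "K \<ge> 0"
    and K: "\<And>y. (\<Sum>s\<in>{1..m}\<times>{1..n}. step_weight n k J G y s) \<le> K"
  defines "c \<equiv> real k * (real k - 1) / (real n * (real n - 1))"
  shows "overlap_weight n k J G ({1..m}\<times>{1..n}) (Suc L) y \<le>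
     (\<Sum>b\<in>J. if y \<in> set (G b) then 1 else 0) * real k * K ^ L
     + real m * c * (\<Sum>z\<in>{1..n}. overlap_weight n k J G ({1..m}\<times>{1..n}) L z)"
proof -
  let ?S = "{1..m}\<times>{1..n}"
  let ?A = "\<lambda>z. (\<Sum>st\<in>walks_of_length ?S L. walk_weight n k J G z st)"
  let ?B = "\<lambda>z. overlap_weight n k J G ?S L z"
  let ?f = "\<lambda>s. step_weight n k J G y s * (if fst s \<in> J then ?A (snd s) else ?B (snd s))"
  have c0: "c \<ge> 0"
    unfolding c_def using real_mult_pred_nonneg[of k] real_mult_pred_nonneg[of n] by simp
  have "overlap_weight n k J G ?S (Suc L) y = (\<Sum>s\<in>?S. ?f s)"
    by (rule overlap_weight_Suc) simp
  also have "\<dots> = (\<Sum>b\<in>{1..m}. \<Sum>z\<in>{1..n}. ?f (b,z))"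
    unfolding sum.cartesian_product by (rule sum.cong) auto
  also have "\<dots> = (\<Sum>b\<in>J. \<Sum>z\<in>{1..n}. ?f (b,z))
      + (\<Sum>b\<in>{1..m}-J. \<Sum>z\<in>{1..n}. ?f (b,z))"
    by (subst sum.subset_diff[OF J]) (simp_all add: add.commute)
  finally have split: "overlap_weight n k J G ?S (Suc L) y
      = (\<Sum>b\<in>J. \<Sum>z\<in>{1..n}. ?f (b,z)) + (\<Sum>b\<in>{1..m}-J. \<Sum>z\<in>{1..n}. ?f (b,z))" .
  have frozen: "(\<Sum>b\<in>J. \<Sum>z\<in>{1..n}. ?f (b,z))
      \<le> (\<Sum>b\<in>J. if y \<in> set (G b) then 1 else 0) * real k * K ^ L"
  proof -
    have "(\<Sum>b\<in>J. \<Sum>z\<in>{1..n}. ?f (b,z))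
        \<le> (\<Sum>b\<in>J. (if y \<in> set (G b) then 1 else 0) * real k * K ^ L)"
    proof (rule sum_mono)
      fix b assume b: "b \<in> J"
      then have "(\<Sum>z\<in>{1..n}. ?f (b,z)) = (\<Sum>z\<in>{1..n}. pair_ind y z (G b) * ?A z)"
        by (simp add: step_weight_def)
      also have "\<dots> \<le> (if y \<in> set (G b) then 1 else 0) * real k * K ^ L"
        by (rule frozen_first_step_le[OF G b J k K0 K])
      finally show "(\<Sum>z\<in>{1..n}. ?f (b,z))
          \<le> (if y \<in> set (G b) then 1 else 0) * real k * K ^ L" .
    qed
    then show ?thesis by (simp add: sum_distrib_right)
  qed
  have free: "(\<Sum>b\<in>{1..m}-J. \<Sum>z\<in>{1..n}. ?f (b,z))
      \<le> real m * c * (\<Sum>z\<in>{1..n}. ?B z)"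
  proof -
    have "(\<Sum>b\<in>{1..m}-J. \<Sum>z\<in>{1..n}. ?f (b,z))
        \<le> (\<Sum>b\<in>{1..m}-J. c * (\<Sum>z\<in>{1..n}. ?B z))"
    proof (rule sum_mono)
      fix b assume "b \<in> {1..m}-J"
      then have "(\<Sum>z\<in>{1..n}. ?f (b,z)) = (\<Sum>z\<in>{1..n}. pair_weight n k y z * ?B z)"
        by (simp add: step_weight_def)
      also have "\<dots> \<le> c * (\<Sum>z\<in>{1..n}. ?B z)" unfolding c_def by (rule free_first_step_le[OF k])
      finally show "(\<Sum>z\<in>{1..n}. ?f (b,z)) \<le> c * (\<Sum>z\<in>{1..n}. ?B z)" .
    qed
    also have "\<dots> \<le> (\<Sum>b\<in>{1..m}. c * (\<Sum>z\<in>{1..n}. ?B z))"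
      by (rule sum_mono2) (use c0 overlap_weight_nonneg[OF k] in \<open>auto intro!: mult_nonneg_nonneg sum_nonneg\<close>)
    finally show ?thesis by simp
  qed
  show ?thesis using split frozen free by linarith
qed

(* Summed over a set Y of start points: each frozen constraint contains at most k of them. *)
lemma overlap_weight_sum_Suc_le:
  assumes G: "G \<in> configs n m k" and J: "J \<subseteq> {1..m}" and k: "k \<ge> 1" and K0: "K \<ge> 0"
    and K: "\<And>y. (\<Sum>s\<in>{1..m}\<times>{1..n}. step_weight n k J G y s) \<le> K"
    and Y: "finite Y"
  defines "c \<equiv> real k * (real k - 1) / (real n * (real n - 1))"
  shows "(\<Sum>y\<in>Y. overlap_weight n k J G ({1..m}\<times>{1..n}) (Suc L) y) \<le>
     real (card J) * real k * real k * K ^ L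
     + real (card Y) * (real m * c * (\<Sum>z\<in>{1..n}. overlap_weight n k J G ({1..m}\<times>{1..n}) L z))"
proof -
  let ?B = "(\<Sum>z\<in>{1..n}. overlap_weight n k J G ({1..m}\<times>{1..n}) L z)"
  have "(\<Sum>y\<in>Y. overlap_weight n k J G ({1..m}\<times>{1..n}) (Suc L) y) \<le>
     (\<Sum>y\<in>Y. (\<Sum>b\<in>J. if y \<in> set (G b) then 1 else 0) * real k * K ^ L + real m * c * ?B)"
    by (rule sum_mono) (use overlap_weight_Suc_le[OF G J k K0 K] in \<open>simp add: c_def\<close>)
  also have "\<dots> = (\<Sum>b\<in>J. \<Sum>y\<in>Y. if y \<in> set (G b) then 1 else 0) * real k * K ^ L + real (card Y) * (real m * c * ?B)"
    by (simp add: sum.distrib sum_distrib_right[symmetric] sum.swap[of _ Y J])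
  finally have e0: "(\<Sum>y\<in>Y. overlap_weight n k J G ({1..m}\<times>{1..n}) (Suc L) y)
      \<le> (\<Sum>b\<in>J. \<Sum>y\<in>Y. if y \<in> set (G b) then 1 else 0) * real k * K ^ L + real (card Y) * (real m * c * ?B)" .
  have "(\<Sum>b\<in>J. \<Sum>y\<in>Y. if y \<in> set (G b) then 1 else 0) \<le> (\<Sum>b\<in>J. real k)"
  proof (rule sum_mono)
    fix b assume b: "b \<in> J"
    have "(\<Sum>y\<in>Y. if y \<in> set (G b) then 1 else 0) = real (card (Y \<inter> set (G b)))"
      using Y by (simp add: sum.If_cases)
    also have "\<dots> \<le> real (card (set (G b)))" by (simp add: card_mono)
    also have "\<dots> = real k" using tuples_set[OF configs_mem[OF G, of b]] b J by auto
    finally show "(\<Sum>y\<in>Y. if y \<in> set (G b) then 1 else 0) \<le> real k" .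
  qed
  then have "(\<Sum>b\<in>J. \<Sum>y\<in>Y. if y \<in> set (G b) then 1 else 0)
      \<le> real (card J) * real k" by simp
  then have "(\<Sum>b\<in>J. \<Sum>y\<in>Y. if y \<in> set (G b) then 1 else 0) * (real k * K ^ L)
      \<le> real (card J) * real k * (real k * K ^ L)"
    by (rule mult_right_mono) (use K0 in simp)
  then show ?thesis using e0 by (simp add: mult.assoc)
qed


lemma free_step_factor_le:
  assumes n2: "n \<ge> 2" and rho1: "real m * (real k * (real k - 1) / real n) \<le> 1"
  shows "real m * (real k * (real k - 1) / (real n * (real n - 1))) \<le> 2 / real n"
proof -
  have rn: "real n > 1" using n2 by simp
  have "real m * (real k * (real k - 1) / (real n * (real n - 1)))
      = real m * (real k * (real k - 1) / real n) / (real n - 1)"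
    by (simp add: field_simps)
  also have "\<dots> \<le> 1 / (real n - 1)" by (rule divide_right_mono[OF rho1]) (use rn in simp)
  also have "\<dots> \<le> 2 / real n" using rn n2 by (simp add: field_simps)
  finally show ?thesis .
qed

lemma step_weight_row_le:
  assumes G: "G \<in> configs n m k" and J: "J \<subseteq> {1..m}" and cJ: "card J
      \<le> L0" and k: "k \<ge> 1"
    and rho1: "real m * (real k * (real k - 1) / real n) \<le> 1"
  shows "(\<Sum>s\<in>{1..m}\<times>{1..n}. step_weight n k J G y s) \<le> real L0 * real k + 1"
proof -
  have "(\<Sum>s\<in>{1..m}\<times>{1..n}. step_weight n k J G y s)
      \<le> real (card J) * real k + real m * (real k * (real k - 1) / real n)"
    by (rule row_bound[OF G J k])
  also have "\<dots> \<le> real L0 * real k + 1" using cJ rho1 by (intro add_mono mult_right_mono) auto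
  finally show ?thesis .
qed

lemma beta_rec:
  fixes \<beta> :: "nat \<Rightarrow> real"
  assumes b0: "\<beta> 0 = 0" and rec: "\<And>L. \<beta> (Suc L) \<le> j * K ^ L + 2 * \<beta> L"
    and K: "K \<ge> 0" and j: "j \<ge> 0"
  shows "\<beta> L \<le> real L * j * (K + 2) ^ L"
proof (induction L)
  case 0 then show ?case using b0 by simp
next
  case (Suc L)
  have kk: "K ^ L \<le> (K + 2) ^ L" using K by (intro power_mono) auto
  have p: "(K + 2) ^ L \<ge> 0" using K by simp
  have "\<beta> (Suc L) \<le> j * K ^ L + 2 * (real L * j * (K + 2) ^ L)" using rec[of L] Suc.IH by linarith
  also have "\<dots> \<le> j * (K + 2) ^ L + 2 * (real L * j * (K + 2) ^ L)"
    using mult_left_mono[OF kk j] by linarith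
  also have "\<dots> = (1 + 2 * real L) * (j * (K + 2) ^ L)" by (simp add: algebra_simps)
  also have "\<dots> \<le> ((real L + 1) * (K + 2)) * (j * (K + 2) ^ L)"
  proof (rule mult_right_mono)
    have "(real L + 1) * 2 \<le> (real L + 1) * (K + 2)" by (rule mult_left_mono) (use K in auto)
    then show "1 + 2 * real L \<le> (real L + 1) * (K + 2)" by simp
  qed (use j p in simp)
  also have "\<dots> = real (Suc L) * j * (K + 2) ^ Suc L" by (simp add: algebra_simps)
  finally show ?case .
qed

(* Overlap weight summed over all start variables: it grows at most like L C^L, because
   the free steps contribute the factor n * 2/n = 2 and the frozen ones a bounded amount. *)
lemma overlap_weight_total:
  assumes G: "G \<in> configs n m k" and J: "J \<subseteq> {1..m}" and cJ: "card J
      \<le> L0" and k: "k \<ge> 1"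
    and n2: "n \<ge> 2" and rho1: "real m * (real k * (real k - 1) / real n) \<le> 1"
  shows "(\<Sum>z\<in>{1..n}. overlap_weight n k J G ({1..m}\<times>{1..n}) L z)
       \<le> real L * (real L0 * real k * real k) * (real L0 * real k + 3) ^ L"
proof -
  define K where "K = real L0 * real k + 1"
  define j where "j = real L0 * real k * real k"
  define c where "c = real k * (real k - 1) / (real n * (real n - 1))"
  define \<beta> where "\<beta> L = (\<Sum>z\<in>{1..n}. overlap_weight n k J G ({1..m}\<times>{1..n}) L z)" for L
  have K0: "K \<ge> 0" and j0: "j \<ge> 0" unfolding K_def j_def by auto
  have row: "\<And>y. (\<Sum>s\<in>{1..m}\<times>{1..n}. step_weight n k J G y s) \<le> K"
    unfolding K_def by (rule step_weight_row_le[OF G J cJ k rho1])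
  have nmc: "real n * (real m * c) \<le> 2"
    using free_step_factor_le[OF n2 rho1] n2 unfolding c_def by (simp add: field_simps)
  have rec: "\<beta> (Suc L) \<le> j * K ^ L + 2 * \<beta> L" for L
  proof -
    have bnn: "\<beta> L \<ge> 0" unfolding \<beta>_def by (rule sum_nonneg) (simp add: overlap_weight_nonneg[OF k])
    have "\<beta> (Suc L) \<le> real (card J) * real k * real k * K ^ L
        + real (card {1..n}) * (real m * c * \<beta> L)"
      unfolding \<beta>_def c_def by (rule overlap_weight_sum_Suc_le[OF G J k K0 row]) simp
    also have "real (card J) * real k * real k * K ^ L \<le> j * K ^ L"
      unfolding j_def using cJ K0 by (intro mult_right_mono) auto
    also have "real (card {1..n}) * (real m * c * \<beta> L) = (real n * (real m * c)) * \<beta> L" by simp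
    also have "\<dots> \<le> 2 * \<beta> L" using nmc bnn by (intro mult_right_mono) auto
    finally show ?thesis by simp
  qed
  have "\<beta> L \<le> real L * j * (K + 2) ^ L"
    by (rule beta_rec[OF _ rec K0 j0]) (simp add: \<beta>_def overlap_weight_0)
  then show ?thesis unfolding \<beta>_def j_def K_def by (simp add: add.assoc)
qed

definition overlap_const :: "nat \<Rightarrow> nat \<Rightarrow> real" where
  "overlap_const k L0 = real L0 * (real L0 * real k * real k) * (real L0 * real k + 3) ^ L0"

lemma overlap_bound:
  assumes G: "G \<in> configs n m k" and J: "J \<subseteq> {1..m}" and cJ: "card J
      \<le> L0" and k: "k \<ge> 1"
    and n2: "n \<ge> 2" and rho1: "real m * (real k * (real k - 1) / real n) \<le> 1"
  shows "(\<Sum>L<L0. \<Sum>y\<in>{1..u}. overlap_weight n k J G ({1..m}\<times>{1..n}) (Suc L) y)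
     \<le> overlap_const k L0 * (1 + 2 * real L0 * real u / real n)"
proof -
  define K where "K = real L0 * real k + 1"
  define j where "j = real L0 * real k * real k"
  define P where "P = (K + 2) ^ L0"
  define c where "c = real k * (real k - 1) / (real n * (real n - 1))"
  let ?S = "{1..m}\<times>{1..n}"
  have K0: "K \<ge> 0" and j0: "j \<ge> 0" unfolding K_def j_def by auto
  have row: "\<And>y. (\<Sum>s\<in>?S. step_weight n k J G y s) \<le> K"
    unfolding K_def by (rule step_weight_row_le[OF G J cJ k rho1])
  have mc: "real m * c \<le> 2 / real n" unfolding c_def by (rule free_step_factor_le[OF n2 rho1])
  have per_length: "(\<Sum>y\<in>{1..u}. overlap_weight n k J G ?S (Suc L) y)
                   \<le> j * P + real u * (2 / real n) * (real L0 * j * P)" if L: "L < L0" for L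
  proof -
    let ?\<beta> = "\<Sum>z\<in>{1..n}. overlap_weight n k J G ?S L z"
    have "?\<beta> \<le> real L * j * (K + 2) ^ L"
      using overlap_weight_total[OF G J cJ k n2 rho1, of L] unfolding j_def K_def by (simp add: add.assoc)
    also have "\<dots> \<le> real L0 * j * P"
      unfolding P_def using L K0 j0 by (intro mult_mono power_increasing) auto
    finally have \<beta>: "?\<beta> \<le> real L0 * j * P" .
    have \<beta>0: "?\<beta> \<ge> 0" by (rule sum_nonneg) (simp add: overlap_weight_nonneg[OF k])
    have KP: "K ^ L \<le> P"
    proof -
      have "K ^ L \<le> (K + 2) ^ L" using K0 by (intro power_mono) auto
      also have "\<dots> \<le> (K + 2) ^ L0" using K0 L by (intro power_increasing) auto
      finally show ?thesis unfolding P_def .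
    qed
    have "(\<Sum>y\<in>{1..u}. overlap_weight n k J G ?S (Suc L) y)
        \<le> real (card J) * real k * real k * K ^ L + real (card {1..u}) * (real m * c * ?\<beta>)"
      unfolding c_def by (rule overlap_weight_sum_Suc_le[OF G J k K0 row]) simp
    also have "real (card J) * real k * real k * K ^ L \<le> j * P"
      unfolding j_def using cJ K0 KP by (intro mult_mono) auto
    also have "real m * c * ?\<beta> \<le> (2 / real n) * (real L0 * j * P)"
      using mc \<beta> \<beta>0 by (intro mult_mono) auto
    finally show ?thesis by (simp add: mult_left_mono mult.assoc)
  qed
  have "(\<Sum>L<L0. \<Sum>y\<in>{1..u}. overlap_weight n k J G ?S (Suc L) y)
      \<le> (\<Sum>L<L0. j * P + real u * (2 / real n) * (real L0 * j * P))"
    by (rule sum_mono) (use per_length in simp)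
  also have "\<dots> = real L0 * j * P * (1 + 2 * real L0 * real u / real n)"
    by (simp add: algebra_simps)
  finally show ?thesis unfolding overlap_const_def j_def P_def K_def by (simp add: add.assoc)
qed


definition seed_walks :: "nat \<Rightarrow> nat \<Rightarrow> nat \<Rightarrow> (nat \<times> (nat \<times> nat) list) set" where
  "seed_walks u m n = {(y,st). y \<in> {1..u} \<and> st \<noteq> [] \<and> distinct (map fst st)
      \<and> set st \<subseteq> {1..m}\<times>{1..n}}"

definition walk_count :: "(nat \<Rightarrow> nat list) \<Rightarrow> (nat \<times> (nat \<times> nat) list) set \<Rightarrow> real" where
  "walk_count G Q = (\<Sum>p\<in>Q. if walk_ok G (fst p) (snd p) then 1 else 0)"

definition walk_prob :: "nat \<Rightarrow> nat \<Rightarrow> nat \<Rightarrow> (nat \<times> nat) list \<Rightarrow> real" where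
  "walk_prob n k y st = walk_weight n k {} (\<lambda>_. []) y st"

lemma walk_weight_no_frozen: "walk_weight n k {} G y st = walk_prob n k y st"
  unfolding walk_prob_def by (induction st arbitrary: y) auto

lemma walk_prob_nonneg: "k \<ge> 1 \<Longrightarrow> walk_prob n k y st \<ge> 0"
  unfolding walk_prob_def by (rule walk_weight_nonneg)

(* A seed walk has between 1 and m steps, its constraints being distinct. *)
lemma seed_walks_length: "p \<in> seed_walks u m n \<Longrightarrow> length (snd p) \<in> {1..m}"
proof -
  assume "p \<in> seed_walks u m n"
  then obtain y st where p: "p = (y,st)" and st: "st \<noteq> []" "distinct (map fst st)" "set st \<subseteq> {1..m}\<times>{1..n}"
    unfolding seed_walks_def by auto
  have "length st = card (set (map fst st))" using distinct_card[OF st(2)] by simp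
  also have "\<dots> \<le> card {1..m}" using st(3) by (intro card_mono) auto
  finally have "length st \<le> m" by simp
  moreover have "length st \<ge> 1" using st(1) by (cases st) auto
  ultimately show ?thesis using p by simp
qed

lemma seed_walks_subset: "seed_walks u m n \<subseteq> {(y,st). y \<in> {1..u}
    \<and> set st \<subseteq> {1..m}\<times>{1..n} \<and> length st \<in> {1..m}}"
  using seed_walks_length by (fastforce simp: seed_walks_def)

lemma walks_finite:
  fixes S :: "(nat \<times> nat) set" and Y :: "nat set"
  assumes "finite Y" "finite S" "finite I"
  shows "finite {(y,st). y \<in> Y \<and> set st \<subseteq> S \<and> length st \<in> I}"
proof -
  have "{(y,st). y \<in> Y \<and> set st \<subseteq> S \<and> length st \<in> I}
      = (\<Union>L\<in>I. Y \<times> walks_of_length S L)" by (auto simp: walks_of_length_def)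
  then show ?thesis using assms by (simp add: walks_of_length_finite)
qed

lemma seed_walks_finite: "finite (seed_walks u m n)"
  by (rule finite_subset[OF seed_walks_subset walks_finite]) auto

lemma sum_walk_count:
  assumes Q: "Q \<subseteq> seed_walks u m n"
  shows "(\<Sum>G\<in>configs n m k. walk_count G Q)
      = real (card (configs n m k)) * (\<Sum>p\<in>Q. walk_prob n k (fst p) (snd p))"
proof -
  have "(\<Sum>G\<in>configs n m k. walk_count G Q)
      = (\<Sum>p\<in>Q. \<Sum>G\<in>configs n m k. if walk_ok G (fst p) (snd p) then 1 else 0)"
    unfolding walk_count_def by (rule sum.swap)
  also have "\<dots> = (\<Sum>p\<in>Q. real (card (configs n m k)) * walk_prob n k (fst p) (snd p))"
  proof (rule sum.cong)
    fix p assume p: "p \<in> Q"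
    then have "p \<in> seed_walks u m n" using Q by auto
    then have d: "distinct (map fst (snd p))" "fst ` set (snd p) \<subseteq> {1..m}" unfolding seed_walks_def by (cases p, force)+
    have dep1: "depends_on {} (\<lambda>G. 1)" by (simp add: depends_on_def)
    have "(\<Sum>G\<in>configs n m k. (\<lambda>G. 1) G * (if walk_ok G (fst p) (snd p) then 1 else 0))
        = (\<Sum>G\<in>configs n m k. (\<lambda>G. 1) G * walk_weight n k {} G (fst p) (snd p))"
      by (rule sum_walk_indicator[OF d dep1])
    then show "(\<Sum>G\<in>configs n m k. if walk_ok G (fst p) (snd p) then 1 else 0)
        = real (card (configs n m k)) * walk_prob n k (fst p) (snd p)"
      by (simp add: walk_weight_no_frozen)
  qed simp
  finally show ?thesis by (simp add: sum_distrib_left)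
qed

lemma free_step_row_sum: "(\<Sum>s\<in>{1..m}\<times>{1..n}. step_weight n k {} G y s)
    \<le> real m * (real k * (real k - 1) / real n)"
proof -
  have "(\<Sum>s\<in>{1..m}\<times>{1..n}. step_weight n k {} G y s)
      = (\<Sum>b\<in>{1..m}. \<Sum>z\<in>{1..n}. pair_weight n k y z)"
    unfolding sum.cartesian_product by (rule sum.cong) (auto simp: step_weight_def)
  also have "\<dots> \<le> (\<Sum>b\<in>{1..m}. real k * (real k - 1) / real n)"
    by (rule sum_mono) (rule pair_weight_row_sum)
  finally show ?thesis by simp
qed

lemma sum_walk_prob_le:
  assumes Q: "Q \<subseteq> seed_walks u m n" and I: "\<And>p. p \<in> Q
      \<Longrightarrow> length (snd p) \<in> I" "finite I"
    and k: "k \<ge> 1" and rho: "real m * (real k * (real k - 1) / real n) \<le> \<rho>" "\<rho> \<ge> 0"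
  shows "(\<Sum>p\<in>Q. walk_prob n k (fst p) (snd p)) \<le> (\<Sum>L\<in>I. real u * \<rho> ^ L)"
proof -
  let ?W = "{(y,st). y \<in> {1..u} \<and> set st \<subseteq> {1..m}\<times>{1..n} \<and> length st \<in> I}"
  have QW: "Q \<subseteq> ?W" using Q I(1) unfolding seed_walks_def by auto
  have "(\<Sum>p\<in>Q. walk_prob n k (fst p) (snd p)) \<le> (\<Sum>p\<in>?W. walk_prob n k (fst p) (snd p))"
    by (rule sum_mono2[OF walks_finite QW]) (auto simp: I(2) walk_prob_nonneg[OF k])
  also have "\<dots> = (\<Sum>L\<in>I. \<Sum>y\<in>{1..u}. \<Sum>st\<in>walks_of_length ({1..m}\<times>{1..n}) L. walk_prob n k y st)"
    by (subst walk_sum) (auto simp: I(2))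
  also have "\<dots> \<le> (\<Sum>L\<in>I. \<Sum>y\<in>{1..u}. \<rho> ^ L)"
  proof (intro sum_mono)
    fix L y
    have "(\<Sum>st\<in>walks_of_length ({1..m}\<times>{1..n}) L. walk_weight n k {} (\<lambda>_. []) y st) \<le> \<rho> ^ L"
    proof (rule walk_weight_sum_le_pow[OF _ k _ rho(2)])
      fix y show "(\<Sum>s\<in>{1..m}\<times>{1..n}. step_weight n k {} (\<lambda>_. []) y s) \<le> \<rho>"
        using free_step_row_sum[where m=m and n=n and k=k and G="\<lambda>_. []" and y=y] rho(1) by linarith
    qed simp
    then show "(\<Sum>st\<in>walks_of_length ({1..m}\<times>{1..n}) L. walk_prob n k y st)
        \<le> \<rho> ^ L" by (simp add: walk_prob_def)
  qed
  finally show ?thesis by simp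
qed


lemma sum_walk_weight_frozen_le:
  assumes G: "G \<in> configs n m k" and J: "J \<subseteq> {1..m}" and cJ: "card J
      \<le> L0" and k: "k \<ge> 1"
    and n2: "n \<ge> 2" and rho1: "real m * (real k * (real k - 1) / real n) \<le> 1"
  shows "(\<Sum>q\<in>{p\<in>seed_walks u m n. length (snd p) \<le> L0}. walk_weight n k J G (fst q) (snd q))
     \<le> (\<Sum>q\<in>{p\<in>seed_walks u m n. length (snd p) \<le> L0}. walk_prob n k (fst q) (snd q))
       + (overlap_const k L0 * (1 + 2 * real L0 * real u / real n))"
proof -
  let ?Q = "{p\<in>seed_walks u m n. length (snd p) \<le> L0}"
  let ?S = "{1..m}\<times>{1..n}"
  let ?W = "{(y,st). y \<in> {1..u} \<and> set st \<subseteq> ?S \<and> length st \<in> {1..L0}}"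
  let ?g = "\<lambda>q. if meets J (snd q) then walk_weight n k J G (fst q) (snd q) else 0"
  have pt: "walk_weight n k J G (fst q) (snd q) \<le> walk_prob n k (fst q) (snd q) + ?g q" for q
  proof (cases "meets J (snd q)")
    case True then show ?thesis using walk_prob_nonneg[OF k] by simp
  next
    case False
    then have "J \<inter> fst ` set (snd q) = {} \<inter> fst ` set (snd q)" by (auto simp: meets_def)
    then have "walk_weight n k J G (fst q) (snd q)
        = walk_weight n k {} G (fst q) (snd q)" by (rule walk_weight_cong_frozen)
    then show ?thesis using False by (simp add: walk_weight_no_frozen)
  qed
  have QW: "?Q \<subseteq> ?W"
  proof
    fix q assume "q \<in> ?Q"
    then show "q \<in> ?W" using seed_walks_length[of q u m n] unfolding seed_walks_def by auto
  qed
  have gnn: "?g q \<ge> 0" for q using walk_weight_nonneg[OF k] by simp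
  have "(\<Sum>q\<in>?Q. ?g q) \<le> (\<Sum>q\<in>?W. ?g q)"
    by (rule sum_mono2[OF walks_finite QW]) (use gnn in auto)
  also have "\<dots> = (\<Sum>L\<in>{1..L0}. \<Sum>y\<in>{1..u}. \<Sum>st\<in>walks_of_length ?S L. ?g (y,st))"
    by (rule walk_sum) auto
  also have "\<dots> = (\<Sum>L\<in>{1..L0}. \<Sum>y\<in>{1..u}. overlap_weight n k J G ?S L y)"
    by (simp only: overlap_weight_def fst_conv snd_conv)
  also have "\<dots> = (\<Sum>L<L0. \<Sum>y\<in>{1..u}. overlap_weight n k J G ?S (Suc L) y)"
    by (simp add: sum.atLeast1_atMost_eq)
  also have "\<dots> \<le> overlap_const k L0 * (1 + 2 * real L0 * real u / real n)"
    by (rule overlap_bound[OF G J cJ k n2 rho1])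
  finally have g: "(\<Sum>q\<in>?Q. ?g q) \<le> \<dots>" .
  have "(\<Sum>q\<in>?Q. walk_weight n k J G (fst q) (snd q))
      \<le> (\<Sum>q\<in>?Q. walk_prob n k (fst q) (snd q) + ?g q)"
    by (rule sum_mono) (rule pt)
  also have "\<dots> = (\<Sum>q\<in>?Q. walk_prob n k (fst q) (snd q))
      + (\<Sum>q\<in>?Q. ?g q)" by (rule sum.distrib)
  finally show ?thesis using g by linarith
qed

lemma sum_walk_pair_le:
  fixes u L0 m n k :: nat
  assumes k: "k \<ge> 1" and n2: "n \<ge> 2" and rho1: "real m * (real k * (real k - 1) / real n) \<le> 1"
  defines "Q \<equiv> {p\<in>seed_walks u m n. length (snd p) \<le> L0}"
  defines "W \<equiv> (\<Sum>q\<in>Q. walk_prob n k (fst q) (snd q))"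
  defines "Cst \<equiv> overlap_const k L0 * (1 + 2 * real L0 * real u / real n)"
  defines "v \<equiv> \<lambda>G p. if walk_ok G (fst p) (snd p) then 1 else (0::real)"
  assumes pQ: "p \<in> Q"
  shows "(\<Sum>G\<in>configs n m k. \<Sum>q\<in>Q. v G p * v G q)
       \<le> real (card (configs n m k)) * walk_prob n k (fst p) (snd p) * (W + Cst)"
proof -
  let ?C = "configs n m k"
  define J where "J = fst ` set (snd p)"
  have pP: "p \<in> seed_walks u m n" using pQ unfolding Q_def by auto
  have Jm: "J \<subseteq> {1..m}" and lp: "length (snd p) \<le> L0"
    using pQ unfolding Q_def seed_walks_def J_def by (cases p, force)+
  have cJ: "card J \<le> L0" unfolding J_def using lp
    by (metis card_length le_trans length_map set_map)
  have dv: "depends_on J (\<lambda>G. v G p)" unfolding J_def v_def by (rule walk_ok_depends)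
  have "(\<Sum>G\<in>?C. \<Sum>q\<in>Q. v G p * v G q)
      = (\<Sum>q\<in>Q. \<Sum>G\<in>?C. v G p * v G q)" by (rule sum.swap)
  also have "\<dots> = (\<Sum>q\<in>Q. \<Sum>G\<in>?C. v G p * walk_weight n k J G (fst q) (snd q))"
  proof (rule sum.cong)
    fix q assume "q \<in> Q"
    then have "distinct (map fst (snd q))" "fst ` set (snd q) \<subseteq> {1..m}"
      unfolding Q_def seed_walks_def by (cases q, force)+
    then show "(\<Sum>G\<in>?C. v G p * v G q)
        = (\<Sum>G\<in>?C. v G p * walk_weight n k J G (fst q) (snd q))"
      unfolding v_def by (rule sum_walk_indicator[OF _ _ dv[unfolded v_def]])
  qed simp
  also have "\<dots> = (\<Sum>G\<in>?C. v G p * (\<Sum>q\<in>Q. walk_weight n k J G (fst q) (snd q)))"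
    by (subst sum.swap) (simp add: sum_distrib_left)
  also have "\<dots> \<le> (\<Sum>G\<in>?C. v G p * (W + Cst))"
  proof (rule sum_mono)
    fix G assume G: "G \<in> ?C"
    have "(\<Sum>q\<in>Q. walk_weight n k J G (fst q) (snd q)) \<le> W + Cst"
      unfolding W_def Cst_def Q_def by (rule sum_walk_weight_frozen_le[OF G Jm cJ k n2 rho1])
    then show "v G p * (\<Sum>q\<in>Q. walk_weight n k J G (fst q) (snd q)) \<le> v G p * (W + Cst)"
      by (rule mult_left_mono) (simp add: v_def)
  qed
  also have "\<dots> = (\<Sum>G\<in>?C. v G p) * (W + Cst)" by (simp add: sum_distrib_right)
  also have "(\<Sum>G\<in>?C. v G p) = real (card ?C) * walk_prob n k (fst p) (snd p)"
    using sum_walk_count[of "{p}" u m n k] pP by (simp add: walk_count_def v_def)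
  finally show ?thesis .
qed

lemma sum_walk_count_sq:
  fixes u L0 m n k :: nat
  assumes k: "k \<ge> 1" and n2: "n \<ge> 2" and rho1: "real m * (real k * (real k - 1) / real n) \<le> 1"
  defines "Q \<equiv> {p\<in>seed_walks u m n. length (snd p) \<le> L0}"
  defines "W \<equiv> (\<Sum>q\<in>Q. walk_prob n k (fst q) (snd q))"
  defines "Cst \<equiv> overlap_const k L0 * (1 + 2 * real L0 * real u / real n)"
  shows "(\<Sum>G\<in>configs n m k. (walk_count G Q)\<^sup>2) \<le> real (card (configs n m k)) * W * (W
      + Cst)"
proof -
  let ?C = "configs n m k"
  let ?v = "\<lambda>G p. if walk_ok G (fst p) (snd p) then 1 else (0::real)"
  have "(\<Sum>G\<in>?C. (walk_count G Q)\<^sup>2)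
      = (\<Sum>G\<in>?C. \<Sum>p\<in>Q. \<Sum>q\<in>Q. ?v G p * ?v G q)"
    unfolding walk_count_def power2_eq_square by (simp add: sum_product)
  also have "\<dots> = (\<Sum>p\<in>Q. \<Sum>G\<in>?C. \<Sum>q\<in>Q. ?v G p * ?v G q)" by (rule sum.swap)
  also have "\<dots> \<le> (\<Sum>p\<in>Q. real (card ?C) * walk_prob n k (fst p) (snd p) * (W + Cst))"
    unfolding Q_def W_def Cst_def by (rule sum_mono, rule sum_walk_pair_le[OF k n2 rho1]) simp
  also have "\<dots> = real (card ?C) * W * (W + Cst)"
    unfolding W_def by (simp add: sum_distrib_left sum_distrib_right mult.assoc)
  finally show ?thesis .
qed

lemma chebyshev_count:
  fixes f :: "'a \<Rightarrow> real"
  assumes C: "finite C" and s2: "(\<Sum>G\<in>C. (f G)\<^sup>2) \<le> real (card C) * W * (W + c)"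
    and s1: "(\<Sum>G\<in>C. f G) = real (card C) * W" and t: "t > 0"
  shows "real (card {G\<in>C. f G \<ge> W + t}) * t\<^sup>2 \<le> real (card C) * W * c"
proof -
  have "real (card {G\<in>C. f G \<ge> W + t}) * t\<^sup>2 = (\<Sum>G\<in>{G\<in>C. f G \<ge> W
      + t}. t\<^sup>2)" by simp
  also have "\<dots> \<le> (\<Sum>G\<in>{G\<in>C. f G \<ge> W + t}. (f G - W)\<^sup>2)"
  proof (rule sum_mono)
    fix G assume "G \<in> {G\<in>C. f G \<ge> W + t}"
    then have "t \<le> f G - W" by simp
    then show "t\<^sup>2 \<le> (f G - W)\<^sup>2" using t by (intro power_mono) auto
  qed
  also have "\<dots> \<le> (\<Sum>G\<in>C. (f G - W)\<^sup>2)" by (rule sum_mono2) (auto simp: C)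
  also have "\<dots> = (\<Sum>G\<in>C. (f G)\<^sup>2 - (2 * W) * f G + W\<^sup>2)"
    by (rule sum.cong) (auto simp: power2_eq_square algebra_simps)
  also have "\<dots> = (\<Sum>G\<in>C. (f G)\<^sup>2) - 2 * W * (\<Sum>G\<in>C. f G)
      + real (card C) * W\<^sup>2"
    by (simp add: sum.distrib sum_subtractf sum_distrib_left[symmetric])
  also have "\<dots> \<le> real (card C) * W * c" using s2 s1 by (simp add: power2_eq_square algebra_simps)
  finally show ?thesis .
qed

lemma markov_count:
  fixes f :: "'a \<Rightarrow> real"
  assumes C: "finite C" and nn: "\<And>G. G \<in> C \<Longrightarrow> f G \<ge> 0" and t: "t > 0"
  shows "real (card {G\<in>C. f G \<ge> t}) * t \<le> (\<Sum>G\<in>C. f G)"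
proof -
  have "real (card {G\<in>C. f G \<ge> t}) * t = (\<Sum>G\<in>{G\<in>C. f G \<ge> t}. t)" by simp
  also have "\<dots> \<le> (\<Sum>G\<in>{G\<in>C. f G \<ge> t}. f G)" by (rule sum_mono) simp
  also have "\<dots> \<le> (\<Sum>G\<in>C. f G)" by (rule sum_mono2) (auto simp: C nn)
  finally show ?thesis .
qed


(* The reachable set and the stopping set. *)

lemma walk_ok_append: "walk_ok G y (xs @ ys) = (walk_ok G y xs \<and> walk_ok G (walk_end y xs) ys)"
  by (induction xs arbitrary: y) auto

lemma walk_end_append: "walk_end y (xs @ ys) = walk_end (walk_end y xs) ys"
  by (induction xs arbitrary: y) auto

definition reach :: "nat \<Rightarrow> nat \<Rightarrow> nat \<Rightarrow> (nat \<Rightarrow> nat list) \<Rightarrow> nat set" where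
  "reach u m n G = {1..u} \<union> (\<lambda>p. walk_end (fst p) (snd p)) ` {p\<in>seed_walks u m n. walk_ok G (fst p) (snd p)}"

lemma walk_end_in_reach:
  assumes "y \<in> {1..u}" "distinct (map fst st)" "set st \<subseteq> {1..m}\<times>{1..n}" "walk_ok G y st"
  shows "walk_end y st \<in> reach u m n G"
proof (cases "st = []")
  case True then show ?thesis using assms(1) unfolding reach_def by simp
next
  case False
  then have "(y, st) \<in> seed_walks u m n" using assms unfolding seed_walks_def by auto
  then show ?thesis using assms(4) unfolding reach_def by force
qed

lemma reach_obtain_walk:
  assumes "w \<in> reach u m n G"
  obtains y st where "y \<in> {1..u}" "distinct (map fst st)" "set st \<subseteq> {1..m}\<times>{1..n}"
    "walk_ok G y st" "w = walk_end y st"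
proof (cases "w \<in> {1..u}")
  case True then show ?thesis using that[of w "[]"] by simp
next
  case False then show ?thesis using assms that unfolding reach_def seed_walks_def by auto
qed

lemma walk_extend_in_reach:
  assumes y: "y \<in> {1..u}" and d: "distinct (map fst st)" and S: "set st \<subseteq> {1..m}\<times>{1..n}"
    and ok: "walk_ok G y st" and a: "a \<in> {1..m}" "a \<notin> fst ` set st" and z: "z \<in> {1..n}"
    and step: "walk_end y st \<noteq> z" "walk_end y st \<in> set (G a)" "z \<in> set (G a)"
  shows "z \<in> reach u m n G"
proof -
  have "walk_ok G y (st @ [(a,z)])" using ok step by (simp add: walk_ok_append)
  then have "walk_end y (st @ [(a,z)]) \<in> reach u m n G"
    using y d S a z by (intro walk_end_in_reach) auto
  then show ?thesis by (simp add: walk_end_append)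
qed

(* Take a walk to w.  If it does not use a, extend it by a step through a.  Otherwise cut it
   just before its step through a: that prefix ends in a variable x of a, and z is x itself
   or one step through a away from x. *)
lemma reach_closed:
  assumes G: "G \<in> configs n m k" and a: "a \<in> {1..m}" and w: "w \<in> reach u m n G"
    and wa: "w \<in> set (G a)" and za: "z \<in> set (G a)"
  shows "z \<in> reach u m n G"
proof -
  have zn: "z \<in> {1..n}" using tuples_set[OF configs_mem[OF G a]] za by auto
  obtain y st where y: "y \<in> {1..u}" and d: "distinct (map fst st)" and S: "set st \<subseteq> {1..m}\<times>{1..n}"
    and ok: "walk_ok G y st" and wst: "w = walk_end y st"
    using w by (rule reach_obtain_walk)
  show ?thesis
  proof (cases "a \<in> fst ` set st")
    case False
    then show ?thesis
      using w wa za walk_extend_in_reach[OF y d S ok a False zn] wst by (cases "z = w") auto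
  next
    case True
    then obtain v xs ys where st: "st = xs @ (a,v) # ys" by (auto dest: split_list)
    have okx: "walk_ok G y xs" and x: "walk_end y xs \<in> set (G a)"
      using ok unfolding st walk_ok_append by auto
    have dx: "distinct (map fst xs)" and ax: "a \<notin> fst ` set xs" using d st by auto
    have Sx: "set xs \<subseteq> {1..m}\<times>{1..n}" using S st by auto
    show ?thesis
    proof (cases "z = walk_end y xs")
      case True then show ?thesis using walk_end_in_reach[OF y dx Sx okx] by simp
    next
      case False then show ?thesis using walk_extend_in_reach[OF y dx Sx okx a(1) ax zn _ x za] by simp
    qed
  qed
qed

lemma reach_finite: "finite (reach u m n G)"
  unfolding reach_def using seed_walks_finite by auto

(* Each reachable non-seed variable is the end of some present seed walk. *)
lemma card_reach_le: "real (card (reach u m n G)) \<le> real u + walk_count G (seed_walks u m n)"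
proof -
  have "card (reach u m n G) \<le> card {1..u}
      + card ((\<lambda>p. walk_end (fst p) (snd p)) ` {p\<in>seed_walks u m n. walk_ok G (fst p) (snd p)})"
    unfolding reach_def by (rule card_Un_le)
  also have "\<dots> \<le> u + card {p\<in>seed_walks u m n. walk_ok G (fst p) (snd p)}"
  proof -
    have "finite {p\<in>seed_walks u m n. walk_ok G (fst p) (snd p)}" using seed_walks_finite by simp
    then show ?thesis using card_image_le by simp
  qed
  finally have "real (card (reach u m n G)) \<le> real u
      + real (card {p\<in>seed_walks u m n. walk_ok G (fst p) (snd p)})" by linarith
  moreover have "walk_count G (seed_walks u m n)
      = real (card {p\<in>seed_walks u m n. walk_ok G (fst p) (snd p)})"
    unfolding walk_count_def using seed_walks_finite by (simp add: sum.If_cases Int_def)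
  ultimately show ?thesis by simp
qed

(* The complement of a set of variables that is closed under "shares a constraint with"
   is a k-stopping set: every constraint lies entirely inside or entirely outside it. *)
lemma closed_complement_stopping:
  assumes G: "G \<in> configs n m k" and k: "k \<ge> 2"
    and closed: "\<And>a w z. a \<in> {1..m} \<Longrightarrow> w \<in> R
        \<Longrightarrow> w \<in> set (G a) \<Longrightarrow> z \<in> set (G a) \<Longrightarrow> z \<in> R"
  shows "stopping_set k m G ({1..n} - R)"
  unfolding stopping_set_def
proof
  fix a assume a: "a \<in> {1..m}"
  let ?V = "{1..n} - R"
  have ta: "set (G a) \<subseteq> {1..n}" "card (set (G a))
      = k" using tuples_set[OF configs_mem[OF G a]] by auto
  show "card (set (G a) \<inter> ?V) \<notin> {1..k - 1}"
  proof (cases "set (G a) \<inter> R = {}")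
    case True
    then have "set (G a) \<inter> ?V = set (G a)" using ta(1) by auto
    then show ?thesis using ta(2) k by auto
  next
    case False
    then have "set (G a) \<subseteq> R" using closed[OF a] by blast
    then have "set (G a) \<inter> ?V = {}" by auto
    then show ?thesis by simp
  qed
qed

lemma reach_complement_stopping:
  fixes u :: nat
  assumes G: "G \<in> configs n m k" and k: "k \<ge> 2"
  defines "V \<equiv> {1..n} - reach u m n G"
  shows "V \<subseteq> {u + 1..n}" "stopping_set k m G V"
    "real (card V) \<ge> real n - real u - walk_count G (seed_walks u m n)"
proof -
  show "V \<subseteq> {u + 1..n}" unfolding V_def reach_def by auto
  show "stopping_set k m G V"
    unfolding V_def by (rule closed_complement_stopping[OF G k reach_closed[OF G]])
  have "card {1..n} \<le> card (V \<union> reach u m n G)" unfolding V_def by (rule card_mono) (auto simp: reach_finite)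
  also have "\<dots> \<le> card V + card (reach u m n G)" by (rule card_Un_le)
  finally have "real n \<le> real (card V) + real (card (reach u m n G))" by simp
  then show "real (card V) \<ge> real n - real u - walk_count G (seed_walks u m n)"
    using card_reach_le[of u m n G] by linarith
qed

lemma geometric_sum_tail_le:
  fixes \<rho> :: real
  assumes I: "finite I" "\<And>L. L \<in> I \<Longrightarrow> a \<le> L" and r: "0 \<le> \<rho>" "\<rho> < 1"
  shows "(\<Sum>L\<in>I. \<rho> ^ L) \<le> \<rho> ^ a / (1 - \<rho>)"
proof -
  define f where "f i = \<rho> ^ a * \<rho> ^ i" for i :: nat
  have inj: "inj_on (\<lambda>L. L - a) I" using I(2) by (intro inj_onI) (metis le_add_diff_inverse)
  have "(\<Sum>L\<in>I. \<rho> ^ L) = (\<Sum>L\<in>I. f (L - a))"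
    by (rule sum.cong) (auto simp: f_def I(2) power_add[symmetric])
  also have "\<dots> = (\<Sum>i\<in>(\<lambda>L. L - a) ` I. f i)" by (simp add: sum.reindex[OF inj])
  also have "\<dots> \<le> suminf f"
  proof (rule sum_le_suminf)
    show "summable f" unfolding f_def using r by (intro summable_mult summable_geometric) auto
  qed (use I r in \<open>auto simp: f_def\<close>)
  also have "suminf f = \<rho> ^ a * (1 / (1 - \<rho>))"
    unfolding f_def using r by (subst suminf_mult) (auto simp: suminf_geometric)
  finally show ?thesis by simp
qed

(* The finite-n probability estimate. *)

lemma few_walks_imp_stopping_set:
  assumes G: "G \<in> configs n m k" and k: "k \<ge> 2"
    and few: "walk_count G (seed_walks u m n) < \<tau> * real u"
  shows "\<exists>V. V \<subseteq> {u + 1..n} \<and> stopping_set k m G V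
      \<and> real (card V) > real n - (1 + \<tau>) * real u"
proof -
  define V where "V = {1..n} - reach u m n G"
  have "V \<subseteq> {u + 1..n}" "stopping_set k m G V"
    "real (card V) \<ge> real n - real u - walk_count G (seed_walks u m n)"
    unfolding V_def by (rule reach_complement_stopping[OF G k])+
  then show ?thesis using few by (intro exI[of _ V]) (auto simp: algebra_simps)
qed

lemma walk_count_split:
  "finite Q \<Longrightarrow> walk_count G Q = walk_count G {p\<in>Q. P p}
      + walk_count G {p\<in>Q. \<not> P p}"
proof -
  assume "finite Q"
  then have "walk_count G Q = walk_count G (Q \<inter> {p. P p}) + walk_count G (Q - {p. P p})"
    unfolding walk_count_def by (rule sum.Int_Diff)
  moreover have "Q \<inter> {p. P p} = {p\<in>Q. P p}" "Q - {p. P p} = {p\<in>Q. \<not> P p}" by auto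
  ultimately show ?thesis by simp
qed

lemma prob_cfg_union_bound:
  assumes bad: "{G\<in>configs n m k. \<not> P G} \<subseteq> A1 \<union> A2"
    and A: "A1 \<subseteq> configs n m k" "A2 \<subseteq> configs n m k" and C0: "card (configs n m k) > 0"
  shows "prob_cfg n m k P
       \<ge> 1 - (real (card A1) / real (card (configs n m k)) + real (card A2) / real (card (configs n m k)))"
proof -
  let ?C = "configs n m k"
  have fA: "finite A1" "finite A2" using A configs_finite finite_subset by blast+
  have "card ?C = card {G\<in>?C. P G} + card {G\<in>?C. \<not> P G}"
    using configs_finite by (subst card_Un_disjoint[symmetric]) (auto intro: arg_cong[where f=card])
  moreover have "card {G\<in>?C. \<not> P G} \<le> card A1 + card A2"
    using card_mono[OF _ bad] card_Un_le[of A1 A2] fA by (meson finite_UnI le_trans)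
  ultimately have good: "real (card {G\<in>?C. P G}) \<ge> real (card ?C) - real (card A1) - real (card A2)"
    by linarith
  have "1 - (real (card A1) / real (card ?C) + real (card A2) / real (card ?C))
      = (real (card ?C) - real (card A1) - real (card A2)) / real (card ?C)"
    using C0 by (simp add: field_simps)
  also have "\<dots> \<le> real (card {G\<in>?C. P G}) / real (card ?C)"
    using good C0 by (intro divide_right_mono) auto
  finally show ?thesis unfolding prob_cfg_def .
qed

lemma sum_short_walk_prob_le:
  assumes k: "k \<ge> 1" and rho: "real m * (real k * (real k - 1) / real n) \<le> \<rho>"
    and r0: "0 < \<rho>" and r1: "\<rho> < 1"
  shows "(\<Sum>q\<in>{p\<in>seed_walks u m n. length (snd p) \<le> L0}. walk_prob n k (fst q) (snd q))
       \<le> real u * (\<rho> / (1 - \<rho>))"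
proof -
  have "(\<Sum>q\<in>{p\<in>seed_walks u m n. length (snd p) \<le> L0}. walk_prob n k (fst q) (snd q))
      \<le> (\<Sum>L\<in>{1..L0}. real u * \<rho> ^ L)"
    by (rule sum_walk_prob_le[OF _ _ _ k rho]) (use r0 seed_walks_length in auto)
  also have "\<dots> = real u * (\<Sum>L\<in>{1..L0}. \<rho> ^ L)" by (simp add: sum_distrib_left)
  also have "\<dots> \<le> real u * (\<rho> ^ 1 / (1 - \<rho>))"
    using geometric_sum_tail_le[of "{1..L0}" 1 \<rho>] r0 r1 by (intro mult_left_mono) auto
  finally show ?thesis by simp
qed

lemma sum_long_walk_prob_le:
  assumes k: "k \<ge> 1" and rho: "real m * (real k * (real k - 1) / real n) \<le> \<rho>"
    and r0: "0 < \<rho>" and r1: "\<rho> < 1"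
  shows "(\<Sum>q\<in>{p\<in>seed_walks u m n. \<not> length (snd p) \<le> L0}. walk_prob n k (fst q) (snd q))
       \<le> real u * (\<rho> ^ (L0 + 1) / (1 - \<rho>))"
proof -
  have "(\<Sum>q\<in>{p\<in>seed_walks u m n. \<not> length (snd p) \<le> L0}. walk_prob n k (fst q) (snd q))
      \<le> (\<Sum>L\<in>{L0+1..m}. real u * \<rho> ^ L)"
    by (rule sum_walk_prob_le[OF _ _ _ k rho]) (use r0 seed_walks_length in force)+
  also have "\<dots> = real u * (\<Sum>L\<in>{L0+1..m}. \<rho> ^ L)" by (simp add: sum_distrib_left)
  also have "\<dots> \<le> real u * (\<rho> ^ (L0 + 1) / (1 - \<rho>))"
    using geometric_sum_tail_le[of "{L0+1..m}" "L0+1" \<rho>] r0 r1 by (intro mult_left_mono) auto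
  finally show ?thesis .
qed

lemma short_walks_excess:
  fixes n m k u L0 :: nat and \<rho> \<delta> :: real
  assumes k: "k \<ge> 1" and n2: "n \<ge> 2" and C0: "card (configs n m k) > 0" and u1: "u \<ge> 1"
    and rho: "real m * (real k * (real k - 1) / real n)
        \<le> \<rho>" and r0: "0 < \<rho>" and r1: "\<rho> < 1"
    and d: "\<delta> > 0"
  defines "Q \<equiv> {p\<in>seed_walks u m n. length (snd p) \<le> L0}"
  defines "W \<equiv> (\<Sum>q\<in>Q. walk_prob n k (fst q) (snd q))"
  shows "real (card {G\<in>configs n m k. walk_count G Q \<ge> W
      + \<delta> * real u}) / real (card (configs n m k))
       \<le> \<rho> / (1 - \<rho>) * overlap_const k L0 / \<delta>\<^sup>2 * (1 / real u + 2 * real L0 / real n)"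
proof -
  let ?C = "configs n m k" and ?A = "{G\<in>configs n m k. walk_count G Q \<ge> W + \<delta> * real u}"
  define Cst where "Cst = overlap_const k L0 * (1 + 2 * real L0 * real u / real n)"
  define \<tau>0 where "\<tau>0 = \<rho> / (1 - \<rho>)"
  have ru: "real u > 0" using u1 by simp
  have Cnn: "Cst \<ge> 0" unfolding Cst_def overlap_const_def by simp
  have rho1: "real m * (real k * (real k - 1) / real n) \<le> 1" using rho r1 by linarith
  have W: "W \<le> real u * \<tau>0"
    unfolding W_def Q_def \<tau>0_def by (rule sum_short_walk_prob_le[OF k rho r0 r1])
  have "real (card ?A) * (\<delta> * real u)\<^sup>2 \<le> real (card ?C) * W * Cst"
  proof (rule chebyshev_count[OF configs_finite])
    show "(\<Sum>G\<in>?C. (walk_count G Q)\<^sup>2) \<le> real (card ?C) * W * (W + Cst)"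
      unfolding Q_def W_def Cst_def by (rule sum_walk_count_sq[OF k n2 rho1])
    show "(\<Sum>G\<in>?C. walk_count G Q) = real (card ?C) * W"
      unfolding W_def by (rule sum_walk_count[where u=u]) (simp add: Q_def)
  qed (use d ru in simp)
  also have "\<dots> \<le> real (card ?C) * (real u * \<tau>0) * Cst"
    using W Cnn by (intro mult_right_mono mult_left_mono) auto
  finally have "real (card ?A) \<le> real (card ?C) * (real u * \<tau>0) * Cst / (\<delta> * real u)\<^sup>2"
    using d ru by (simp add: le_divide_eq)
  also have "\<dots> = (\<tau>0 * overlap_const k L0 / \<delta>\<^sup>2 * (1 / real u
      + 2 * real L0 / real n)) * real (card ?C)"
    unfolding Cst_def using d ru n2 by (simp add: power2_eq_square field_simps)
  finally show ?thesis unfolding \<tau>0_def using C0 by (intro pos_divide_le_eq[THEN iffD2]) auto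
qed

lemma long_walks_excess:
  fixes n m k u L0 :: nat and \<rho> \<delta> :: real
  assumes k: "k \<ge> 1" and C0: "card (configs n m k) > 0" and u1: "u \<ge> 1"
    and rho: "real m * (real k * (real k - 1) / real n)
        \<le> \<rho>" and r0: "0 < \<rho>" and r1: "\<rho> < 1"
    and d: "\<delta> > 0"
  defines "Q \<equiv> {p\<in>seed_walks u m n. \<not> length (snd p) \<le> L0}"
  shows "real (card {G\<in>configs n m k. walk_count G Q \<ge> \<delta> * real u}) / real (card (configs n m k))
       \<le> \<rho> ^ (L0 + 1) / ((1 - \<rho>) * \<delta>)"
proof -
  let ?C = "configs n m k" and ?A = "{G\<in>configs n m k. walk_count G Q \<ge> \<delta> * real u}"
  define t where "t = \<rho> ^ (L0 + 1) / (1 - \<rho>)"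
  have ru: "real u > 0" using u1 by simp
  have "real (card ?A) * (\<delta> * real u) \<le> (\<Sum>G\<in>?C. walk_count G Q)"
    by (rule markov_count[OF configs_finite]) (use d ru in \<open>auto simp: walk_count_def intro!: sum_nonneg\<close>)
  also have "\<dots> = real (card ?C) * (\<Sum>q\<in>Q. walk_prob n k (fst q) (snd q))"
    by (rule sum_walk_count[where u=u]) (simp add: Q_def)
  also have "\<dots> \<le> real (card ?C) * (real u * t)"
    unfolding Q_def t_def by (intro mult_left_mono sum_long_walk_prob_le[OF k rho r0 r1]) simp
  finally have "real (card ?A) \<le> real (card ?C) * (real u * t) / (\<delta> * real u)"
    using d ru by (simp add: le_divide_eq)
  also have "\<dots> = (t / \<delta>) * real (card ?C)" using ru by simp
  finally show ?thesis unfolding t_def using C0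
    by (simp add: divide_divide_eq_left pos_divide_le_eq)
qed

lemma prob_bound:
  fixes n m k u L0 :: nat and \<rho> \<delta> \<tau> :: real
  assumes k: "k \<ge> 2" and n2: "n \<ge> 2" and nk: "k \<le> n" and u1: "u \<ge> 1"
    and rho: "real m * (real k * (real k - 1) / real n)
        \<le> \<rho>" and r0: "0 < \<rho>" and r1: "\<rho> < 1"
    and d: "\<delta> > 0" and tau: "\<tau> \<ge> \<rho> / (1 - \<rho>) + 2 * \<delta>"
  shows "prob_cfg n m k (\<lambda>G. \<exists>V. V \<subseteq> {u + 1..n} \<and> stopping_set k m G V
                   \<and> real (card V) > real n - (1 + \<tau>) * real u)
     \<ge> 1 - (\<rho> / (1 - \<rho>) * overlap_const k L0 / \<delta>\<^sup>2 * (1 / real u + 2 * real L0 / real n)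
            + \<rho> ^ (L0 + 1) / ((1 - \<rho>) * \<delta>))"
proof -
  let ?C = "configs n m k"
  define Q1 where "Q1 = {p\<in>seed_walks u m n. length (snd p) \<le> L0}"
  define Q2 where "Q2 = {p\<in>seed_walks u m n. \<not> length (snd p) \<le> L0}"
  define W1 where "W1 = (\<Sum>q\<in>Q1. walk_prob n k (fst q) (snd q))"
  define A1 where "A1 = {G\<in>?C. walk_count G Q1 \<ge> W1 + \<delta> * real u}"
  define A2 where "A2 = {G\<in>?C. walk_count G Q2 \<ge> \<delta> * real u}"
  have k1: "k \<ge> 1" using k by simp
  have C0: "card ?C > 0" using tuples_card_pos[OF nk] by (simp add: configs_card)
  have W1: "W1 \<le> real u * (\<rho> / (1 - \<rho>))"
    unfolding W1_def Q1_def by (rule sum_short_walk_prob_le[OF k1 rho r0 r1])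
  have bad: "{G\<in>?C. \<not> (\<exists>V. V \<subseteq> {u + 1..n} \<and> stopping_set k m G V
                   \<and> real (card V) > real n - (1 + \<tau>) * real u)} \<subseteq> A1 \<union> A2"
  proof (clarify)
    fix G assume G: "G \<in> ?C" and notA: "G \<notin> A2" and
      ng: "\<not> (\<exists>V. V \<subseteq> {u + 1..n} \<and> stopping_set k m G V
          \<and> real (card V) > real n - (1 + \<tau>) * real u)"
    show "G \<in> A1"
    proof (rule ccontr)
      assume "G \<notin> A1"
      then have "walk_count G Q1 < W1 + \<delta> * real u" "walk_count G Q2 < \<delta> * real u"
        using G notA unfolding A1_def A2_def by auto
      moreover have "walk_count G (seed_walks u m n) = walk_count G Q1 + walk_count G Q2"
        unfolding Q1_def Q2_def by (rule walk_count_split[OF seed_walks_finite])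
      moreover have "(\<rho> / (1 - \<rho>) + 2 * \<delta>) * real u
          \<le> \<tau> * real u" using tau by (intro mult_right_mono) auto
      ultimately have "walk_count G (seed_walks u m n) < \<tau> * real u" using W1 by (simp add: algebra_simps)
      then show False using few_walks_imp_stopping_set[OF G k] ng by blast
    qed
  qed
  have "real (card A1) / real (card ?C)
      \<le> \<rho> / (1 - \<rho>) * overlap_const k L0 / \<delta>\<^sup>2 * (1 / real u + 2 * real L0 / real n)"
    unfolding A1_def W1_def Q1_def by (rule short_walks_excess[OF k1 n2 C0 u1 rho r0 r1 d])
  moreover have "real (card A2) / real (card ?C) \<le> \<rho> ^ (L0 + 1) / ((1 - \<rho>) * \<delta>)"
    unfolding A2_def Q2_def by (rule long_walks_excess[OF k1 C0 u1 rho r0 r1 d])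
  moreover have "A1 \<subseteq> ?C" "A2 \<subseteq> ?C" unfolding A1_def A2_def by auto
  ultimately show ?thesis using prob_cfg_union_bound[OF bad _ _ C0] by fastforce
qed

lemma prob_cfg_le_1: "prob_cfg n m k P \<le> 1"
proof -
  have "card {G \<in> configs n m k. P G} \<le> card (configs n m k)"
    by (rule card_mono[OF configs_finite]) auto
  then show ?thesis unfolding prob_cfg_def
    by (cases "card (configs n m k) = 0") (auto simp: divide_le_eq_1)
qed

lemma tendsto_1_if_defect_bounds:
  fixes p :: "nat \<Rightarrow> real" and e :: "nat \<Rightarrow> nat \<Rightarrow> real" and t :: "nat \<Rightarrow> real"
  assumes le1: "\<And>n. p n \<le> 1"
    and bound: "\<And>L. eventually (\<lambda>n. p n \<ge> 1 - (e L n + t L)) sequentially"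
    and e: "\<And>L. e L \<longlonglongrightarrow> 0" and t: "t \<longlonglongrightarrow> 0"
  shows "p \<longlonglongrightarrow> 1"
  unfolding lim_sequentially
proof (intro allI impI)
  fix r :: real assume r: "r > 0"
  obtain L where tL: "t L < r / 2"
    using order_tendstoD(2)[OF t, of "r / 2"] r by (auto simp: eventually_sequentially)
  have "eventually (\<lambda>n. e L n < r / 2) sequentially" using r by (intro order_tendstoD(2)[OF e]) auto
  then have "eventually (\<lambda>n. dist (p n) 1 < r) sequentially"
    using bound[of L]
  proof eventually_elim
    case (elim n)
    then show ?case using le1[of n] tL by (simp add: dist_real_def)
  qed
  then show "\<exists>no. \<forall>n\<ge>no. dist (p n) 1 < r" unfolding eventually_sequentially by auto
qed

lemma constraint_density_le:
  assumes "\<mu> \<ge> 0" "n \<ge> 1"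
  shows "real (nat \<lfloor>\<mu> * real n\<rfloor>) * (real k * (real k - 1) / real n)
      \<le> real k * (real k - 1) * \<mu>"
proof -
  have kk: "real k * (real k - 1) \<ge> 0" by (rule real_mult_pred_nonneg)
  have "real (nat \<lfloor>\<mu> * real n\<rfloor>) * (real k * (real k - 1) / real n)
      \<le> \<mu> * real n * (real k * (real k - 1) / real n)"
    using assms kk by (intro mult_right_mono) auto
  also have "\<dots> = real k * (real k - 1) * \<mu>" using assms by (simp add: field_simps)
  finally show ?thesis .
qed

lemma defect_term_tendsto_0:
  assumes uinf: "filterlim (\<lambda>n. real (u n)) at_top sequentially"
  shows "(\<lambda>n. c * (1 / real (u n) + a / real n)) \<longlonglongrightarrow> 0"
proof -
  have "(\<lambda>n. 1 / real (u n)) \<longlonglongrightarrow> 0"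
    by (rule tendsto_divide_0[OF tendsto_const filterlim_at_top_imp_at_infinity[OF uinf]])
  then have "(\<lambda>n. c * (1 / real (u n) + a / real n)) \<longlonglongrightarrow> c * (0 + 0)"
    by (intro tendsto_mult tendsto_add tendsto_const lim_const_over_n)
  then show ?thesis by simp
qed

(* Main theorem: with rho = k(k-1) mu < 1 and delta = (tau - rho/(1-rho))/2 > 0, the finite-n
   estimate holds for all large n; its first term vanishes as n \<rightarrow> \<infinity> and its second as
   the cutoff grows. *)
theorem mainTheorem5:
  fixes k :: nat and u :: "nat \<Rightarrow> nat" and \<mu> \<tau> :: real
  assumes "k \<ge> 2"
    and "filterlim (\<lambda>n. real (u n)) at_top sequentially"
    and "(\<lambda>n. real (u n) / real n) \<longlonglongrightarrow> 0"
    and "0 < \<mu>" and "\<mu> < 1 / (real k * (real k - 1))"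
    and "\<tau> > real k * (real k - 1) * \<mu> / (1 - real k * (real k - 1) * \<mu>)"
  shows "(\<lambda>n. prob_cfg n (nat \<lfloor>\<mu> * real n\<rfloor>) k
            (\<lambda>G. \<exists>V. V \<subseteq> {u n + 1..n} \<and> stopping_set k (nat \<lfloor>\<mu> * real n\<rfloor>) G V
                   \<and> real (card V) > real n - (1 + \<tau>) * real (u n)))
         \<longlonglongrightarrow> 1"
proof -
  note k = assms(1) and uinf = assms(2) and mu0 = assms(4) and tau = assms(6)
  define \<rho> where "\<rho> = real k * (real k - 1) * \<mu>"
  define \<delta> where "\<delta> = (\<tau> - \<rho> / (1 - \<rho>)) / 2"
  have r0: "\<rho> > 0" and r1: "\<rho> < 1" unfolding \<rho>_def using k mu0 assms(5) by (simp_all add: field_simps)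
  have d0: "\<delta> > 0" using tau unfolding \<delta>_def \<rho>_def by simp
  have "2 * \<delta> = \<tau> - \<rho> / (1 - \<rho>)" unfolding \<delta>_def by simp
  then have tauE: "\<tau> \<ge> \<rho> / (1 - \<rho>) + 2 * \<delta>" by simp
  show ?thesis
  proof (rule tendsto_1_if_defect_bounds[where
      e = "\<lambda>L n. \<rho> / (1 - \<rho>) * overlap_const k L / \<delta>\<^sup>2 * (1 / real (u n)
          + 2 * real L / real n)"
      and t = "\<lambda>L. \<rho> ^ (L + 1) / ((1 - \<rho>) * \<delta>)"])
    show "eventually (\<lambda>n. 1 - (\<rho> / (1 - \<rho>) * overlap_const k L / \<delta>\<^sup>2 * (1 / real (u n) + 2 * real L / real n)
            + \<rho> ^ (L + 1) / ((1 - \<rho>) * \<delta>)) \<le> prob_cfg n (nat \<lfloor>\<mu> * real n\<rfloor>) k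
            (\<lambda>G. \<exists>V. V \<subseteq> {u n + 1..n} \<and> stopping_set k (nat \<lfloor>\<mu> * real n\<rfloor>) G V
                   \<and> real (card V) > real n - (1 + \<tau>) * real (u n))) sequentially" for L
      using eventually_ge_at_top[of "max 2 k"] uinf[unfolded filterlim_at_top, rule_format, of 1]
    proof eventually_elim
      case (elim n)
      then show ?case using mu0 unfolding \<rho>_def
        by (intro prob_bound[OF k _ _ _ constraint_density_le r0[unfolded \<rho>_def] r1[unfolded \<rho>_def] d0
              tauE[unfolded \<rho>_def]]) auto
    qed
    show "(\<lambda>L. \<rho> ^ (L + 1) / ((1 - \<rho>) * \<delta>)) \<longlonglongrightarrow> 0"
      using r0 r1 d0 by (auto intro!: tendsto_eq_intros LIMSEQ_power_zero)
  qed (rule prob_cfg_le_1 defect_term_tendsto_0[OF uinf])+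
qed

end
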